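(* Let $U\subset\mathbb{R}^n$ be open, $V\in C(\mathbb{T}^n)$, $c\in\mathbb{R}$, and let $w_1,w_2\in W^{1,\infty}(U)$ satisfy $\frac12|Dw_i|^2+V(x)\le c$ for a.e. $x\in U$, $i=1,2$. Suppose there is $\eta\in AC([a,b],U)$ such that for $i=1,2$, $$\int_a^b\Big(\tfrac12|\dot\eta(t)|^2-V(\eta(t))+c\Big)\,dt=w_i(\eta(b))-w_i(\eta(a)).$$ Then: (1) $\frac12|\dot\eta(t)|^2+V(\eta(t))=c$ for a.e. $t\in[a,b]$ (in particular $\eta$ is Lipschitz); (2) if $\eta$ is differentiable at $t_0\in(a,b)$, then $w_1,w_2$ are differentiable at $\eta(t_0)$ and $Dw_1(\eta(t_0))=Dw_2(\eta(t_0))=\dot\eta(t_0)$; (3) for every $x\in\eta((a,b))$, $w_1-w_2$ is differentiable at $x$ and $D(w_1-w_2)(x)=0$.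
   Context: $V$ is a continuous $\mathbb{Z}^n$-periodic function on $\mathbb{R}^n$. $AC([a,b],U)$ denotes absolutely continuous curves $[a,b]\to U$. *)

theory Defs
  imports "HOL-Analysis.Analysis"
begin

text \<open>Continuous \<open>\<int>\<^sup>n\<close>-periodic potential on \<open>\<real>\<^sup>n\<close>, i.e. an element of \<open>C(\<T>\<^sup>n)\<close>.\<close>
definition periodic_potential :: "(real^'n \<Rightarrow> real) \<Rightarrow> bool" where
  "periodic_potential V \<longleftrightarrow> continuous_on UNIV V \<and>
     (\<forall>x k. (\<forall>i. k $ i \<in> \<int>) \<longrightarrow> V (x + k) = V x)"

definition AC_curve :: "real \<Rightarrow> real \<Rightarrow> 'a::real_normed_vector set \<Rightarrow> (real \<Rightarrow> 'a) \<Rightarrow> bool" where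
  "AC_curve a b U \<eta> \<longleftrightarrow> \<eta> ` {a..b} \<subseteq> U \<and>
     (\<forall>\<epsilon>>0. \<exists>\<delta>>0. \<forall>D. finite D \<and> (\<forall>(s,t)\<in>D. a \<le> s \<and> s < t \<and> t \<le> b) \<and>
        pairwise (\<lambda>(s,t) (s',t'). {s<..<t} \<inter> {s'<..<t'} = {}) D \<and>
        (\<Sum>(s,t)\<in>D. t - s) < \<delta> \<longrightarrow> (\<Sum>(s,t)\<in>D. norm (\<eta> t - \<eta> s)) < \<epsilon>)"

definition test_function :: "(real^'n) set \<Rightarrow> (real^'n \<Rightarrow> real) \<Rightarrow> (real^'n \<Rightarrow> real^'n) \<Rightarrow> bool" where
  "test_function U \<phi> d\<phi> \<longleftrightarrow>
     (\<forall>x. (\<phi> has_derivative (\<lambda>h. d\<phi> x \<bullet> h)) (at x)) \<and> continuous_on UNIV d\<phi> \<and>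
     compact (closure {x. \<phi> x \<noteq> 0}) \<and> closure {x. \<phi> x \<noteq> 0} \<subseteq> U"

definition weak_gradient_on :: "(real^'n) set \<Rightarrow> (real^'n \<Rightarrow> real) \<Rightarrow> (real^'n \<Rightarrow> real^'n) \<Rightarrow> bool" where
  "weak_gradient_on U w g \<longleftrightarrow>
     (\<forall>\<phi> d\<phi> i. test_function U \<phi> d\<phi> \<longrightarrow>
        ((\<lambda>x. g x $ i * \<phi> x) absolutely_integrable_on U) \<and>
        ((\<lambda>x. w x * d\<phi> x $ i) absolutely_integrable_on U) \<and>
        integral U (\<lambda>x. w x * d\<phi> x $ i) = - integral U (\<lambda>x. g x $ i * \<phi> x))"

text \<open>\<open>w \<in> W\<^sup>1\<^sup>,\<^sup>\<infinity>(U)\<close> (continuous representative) with weak gradient \<open>g \<in> L\<^sup>\<infinity>(U)\<close>.\<close>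
definition W1inf_grad :: "(real^'n) set \<Rightarrow> (real^'n \<Rightarrow> real) \<Rightarrow> (real^'n \<Rightarrow> real^'n) \<Rightarrow> bool" where
  "W1inf_grad U w g \<longleftrightarrow>
     continuous_on U w \<and> (\<exists>M. \<forall>x\<in>U. \<bar>w x\<bar> \<le> M) \<and>
     g \<in> borel_measurable (lebesgue_on U) \<and>
     (\<exists>M. AE x in lebesgue. x \<in> U \<longrightarrow> norm (g x) \<le> M) \<and>
     weak_gradient_on U w g"

end

theory Submission
  imports Defs
begin

text \<open>
  A weak gradient bounded by \<open>k\<close> near \<open>x\<close> makes \<open>w\<close> locally \<open>(k(x) + \<epsilon>)\<close>-Lipschitz (mollify and
  differentiate along segments). Along an absolutely continuous curve a Dini-type argument then gives
  \<open>w(\<eta> t) - w(\<eta> s) \<le> \<integral>\<^sub>s\<^sup>t k(\<eta>) \<bar>\<eta>'\<bar>\<close> with \<open>k = \<surd>(2(c - V))\<close>. Since \<open>k \<bar>\<eta>'\<bar> \<le> \<bar>\<eta>'\<bar>\<^sup>2/2 + c - V\<close>,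
  calibration forces equality: \<open>\<bar>\<eta>'\<bar> = k(\<eta>)\<close> a.e., which is energy conservation, and
  \<open>w(\<eta> t) - w(\<eta> s) = \<integral>\<^sub>s\<^sup>t k(\<eta>)\<^sup>2\<close> on every subinterval.

  So at \<open>x = \<eta> t\<^sub>0\<close> the function \<open>w\<close> grows along \<open>\<eta>\<close>, in both time directions, at the maximal rate
  \<open>k(x)\<^sup>2\<close> allowed by its Lipschitz constant and the speed of \<open>\<eta>\<close>. Comparing \<open>w (x + y)\<close> with
  \<open>w (\<eta> (t\<^sub>0 \<pm> M\<bar>y\<bar>))\<close> by AM-GM shows that the chord \<open>(\<eta> (t\<^sub>0 + M\<bar>y\<bar>) - x) / (M\<bar>y\<bar>)\<close> is a gradient
  of \<open>w\<close> at \<open>x\<close> up to an error \<open>O(1/M)\<close>. The chord depends only on \<open>\<eta>\<close>, so it serves \<open>w\<^sub>1\<close> and \<open>w\<^sub>2\<close>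
  alike; this gives \<open>D(w\<^sub>1 - w\<^sub>2)(x) = 0\<close> even where \<open>\<eta>\<close> is not differentiable.
\<close>

section \<open>Bump functions\<close>

definition bump_profile :: "real \<Rightarrow> real" where
  "bump_profile s = (max 0 s)\<^sup>2"

definition bump :: "'a::real_inner \<Rightarrow> real \<Rightarrow> 'a \<Rightarrow> real" where
  "bump x e v = bump_profile (e\<^sup>2 - (v - x) \<bullet> (v - x))"

definition bump_grad :: "'a::real_inner \<Rightarrow> real \<Rightarrow> 'a \<Rightarrow> 'a" where
  "bump_grad x e v = (- (4 * max 0 (e\<^sup>2 - (v - x) \<bullet> (v - x)))) *\<^sub>R (v - x)"

lemma bump_profile_has_real_derivative:
  "(bump_profile has_real_derivative (2 * max 0 s)) (at s)"
proof (cases "s = 0")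
  case True
  have "((\<lambda>y. (bump_profile y - bump_profile 0) / (y - 0)) \<longlongrightarrow> 0) (at 0)"
  proof (rule tendsto_sandwich[where f="\<lambda>y. - \<bar>y\<bar>" and h="\<lambda>y. \<bar>y\<bar>"])
    show "\<forall>\<^sub>F y in at 0. - \<bar>y\<bar> \<le> (bump_profile y - bump_profile 0) / (y - 0)"
      "\<forall>\<^sub>F y in at 0. (bump_profile y - bump_profile 0) / (y - 0) \<le> \<bar>y\<bar>"
      by (auto simp: bump_profile_def power2_eq_square max_def divide_simps intro!: always_eventually)
  qed (auto intro!: tendsto_eq_intros)
  then show ?thesis
    unfolding True has_field_derivative_iff by simp
next
  case False
  show ?thesis
  proof (cases "s > 0")
    case True
    have "((\<lambda>x. x\<^sup>2) has_real_derivative 2 * max 0 s) (at s)"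
      using True by (auto intro!: derivative_eq_intros)
    then show ?thesis
      by (rule has_field_derivative_transform_within_open[where S="{0<..}"])
        (use True in \<open>auto simp: bump_profile_def\<close>)
  next
    case nonpos: False
    have "((\<lambda>x. 0) has_real_derivative 2 * max 0 s) (at s)"
      using nonpos False by (auto intro!: derivative_eq_intros)
    then show ?thesis
      by (rule has_field_derivative_transform_within_open[where S="{..<0}"])
        (use nonpos False in \<open>auto simp: bump_profile_def\<close>)
  qed
qed

lemma continuous_on_bump_profile: "continuous_on A bump_profile"
  unfolding bump_profile_def by (intro continuous_intros)

lemma bump_has_derivative:
  "(bump x e has_derivative (\<lambda>h. bump_grad x e v \<bullet> h)) (at v)"
proof -
  have inner: "((\<lambda>v. e\<^sup>2 - (v - x) \<bullet> (v - x)) has_derivative (\<lambda>h. - (h \<bullet> (v - x) + (v - x) \<bullet> h))) (at v)"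
    by (auto intro!: derivative_eq_intros)
  have outer: "(bump_profile has_derivative (\<lambda>y. y * (2 * max 0 (e\<^sup>2 - (v - x) \<bullet> (v - x)))))
      (at (e\<^sup>2 - (v - x) \<bullet> (v - x)))"
    using bump_profile_has_real_derivative[THEN has_field_derivative_imp_has_derivative]
    by (rule has_derivative_eq_rhs) (simp add: fun_eq_iff mult.commute)
  show ?thesis
    unfolding bump_def using has_derivative_compose[OF inner outer]
    by (rule has_derivative_eq_rhs) (auto simp: bump_grad_def fun_eq_iff inner_commute algebra_simps)
qed

text \<open>Moving the centre along \<open>d\<close> is the same as moving the variable along \<open>-d\<close>.\<close>

lemma bump_translate_has_real_derivative:
  "((\<lambda>s. bump (x + s *\<^sub>R d) e v) has_real_derivative - (bump_grad (x + s *\<^sub>R d) e v \<bullet> d)) (at s)"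
proof -
  let ?q = "\<lambda>s. e\<^sup>2 - ((v - x) \<bullet> (v - x) - 2 * s * ((v - x) \<bullet> d) + s\<^sup>2 * (d \<bullet> d))"
  have q: "(?q has_real_derivative (2 * ((v - x) \<bullet> d) - 2 * s * (d \<bullet> d))) (at s)"
    by (auto intro!: derivative_eq_intros)
  have q_eq: "?q s = e\<^sup>2 - (v - (x + s *\<^sub>R d)) \<bullet> (v - (x + s *\<^sub>R d))" for s
    by (simp add: algebra_simps inner_diff_left inner_diff_right inner_commute power2_eq_square)
  have "2 * max 0 (?q s) * (2 * ((v - x) \<bullet> d) - 2 * s * (d \<bullet> d))
      = - (bump_grad (x + s *\<^sub>R d) e v \<bullet> d)"
    unfolding q_eq bump_grad_def by (simp add: algebra_simps inner_diff_left inner_commute)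
  moreover have "(\<lambda>s. bump (x + s *\<^sub>R d) e v) = (\<lambda>s. bump_profile (?q s))"
    unfolding bump_def q_eq ..
  ultimately show ?thesis
    using DERIV_chain2[OF bump_profile_has_real_derivative q] by simp
qed

lemma continuous_on_bump_grad: "continuous_on A (bump_grad x e)"
  unfolding bump_grad_def by (intro continuous_intros)

lemma continuous_on_bump: "continuous_on A (bump x e)"
  unfolding bump_def by (intro continuous_on_compose2[OF continuous_on_bump_profile] continuous_intros) auto

lemma bump_nonneg: "bump x e v \<ge> 0"
  by (simp add: bump_def bump_profile_def)

lemma max_0_bump_eq_0:
  assumes "e > 0" "v \<notin> ball x e"
  shows "max 0 (e\<^sup>2 - (v - x) \<bullet> (v - x)) = 0"
proof -
  have "e\<^sup>2 \<le> (dist x v)\<^sup>2" using assms by (intro power_mono) auto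
  moreover have "(v - x) \<bullet> (v - x) = (dist x v)\<^sup>2"
    by (simp add: dist_norm norm_minus_commute power2_norm_eq_inner)
  ultimately show ?thesis by (auto simp: max_def)
qed

lemma bump_support:
  assumes "e > 0"
  shows "{v. bump x e v \<noteq> 0} = ball x e"
proof -
  have "max 0 (e\<^sup>2 - (v - x) \<bullet> (v - x)) \<noteq> 0" if "v \<in> ball x e" for v
  proof -
    have "(v - x) \<bullet> (v - x) = (dist x v)\<^sup>2"
      by (simp add: dist_norm norm_minus_commute power2_norm_eq_inner)
    also have "\<dots> < e\<^sup>2" using that by (intro power_strict_mono) auto
    finally show ?thesis by simp
  qed
  moreover have "max 0 (e\<^sup>2 - (v - x) \<bullet> (v - x)) = 0" if "v \<notin> ball x e" for v
    using max_0_bump_eq_0[OF assms that] .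
  moreover have "bump x e v \<noteq> 0 \<longleftrightarrow> max 0 (e\<^sup>2 - (v - x) \<bullet> (v - x)) \<noteq> 0" for v
    by (simp add: bump_def bump_profile_def)
  ultimately show ?thesis by blast
qed

lemma bump_eq_0: "e > 0 \<Longrightarrow> v \<notin> ball x e \<Longrightarrow> bump x e v = 0"
  using bump_support[of e x] by auto

lemma bump_grad_eq_0: "e > 0 \<Longrightarrow> v \<notin> ball x e \<Longrightarrow> bump_grad x e v = 0"
  by (simp add: bump_grad_def max_0_bump_eq_0)

lemma test_function_bump:
  fixes z :: "real^'n"
  assumes "e > 0" "cball z e \<subseteq> U"
  shows "test_function U (bump z e) (bump_grad z e)"
  unfolding test_function_def
  using assms bump_support[OF assms(1), of z] closure_ball[OF assms(1), of z]
  by (auto simp: bump_has_derivative continuous_on_bump_grad)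

lemma has_integral_UNIV_iff_vanishing_outside:
  fixes f :: "'a::euclidean_space \<Rightarrow> 'b::banach"
  assumes "C \<subseteq> S" "\<And>x. x \<notin> C \<Longrightarrow> f x = 0"
  shows "(f has_integral i) S \<longleftrightarrow> (f has_integral i) UNIV"
proof -
  have "(\<lambda>x. if x \<in> S then f x else 0) = f"
    using assms by fastforce
  then show ?thesis using has_integral_restrict_UNIV[of S f i] by simp
qed

lemma cball_subset_cbox:
  fixes x :: "'a::euclidean_space"
  shows "cball x r \<subseteq> cbox (x - r *\<^sub>R One) (x + r *\<^sub>R One)"
proof
  fix v assume "v \<in> cball x r"
  then have n: "norm (v - x) \<le> r" by (simp add: dist_norm norm_minus_commute)
  show "v \<in> cbox (x - r *\<^sub>R One) (x + r *\<^sub>R One)"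
    unfolding mem_box
  proof
    fix i :: 'a assume i: "i \<in> Basis"
    have "\<bar>(v - x) \<bullet> i\<bar> \<le> r" using Basis_le_norm[OF i, of "v - x"] n by simp
    then show "(x - r *\<^sub>R One) \<bullet> i \<le> v \<bullet> i \<and> v \<bullet> i \<le> (x + r *\<^sub>R One) \<bullet> i"
      using i by (auto simp: inner_diff_left inner_add_left abs_le_iff)
  qed
qed

lemma bump_has_integral:
  fixes x :: "'a::euclidean_space"
  assumes e: "e > 0"
  shows "(bump x e has_integral integral UNIV (bump (0::'a) e)) UNIV"
proof -
  let ?B0 = "cbox (- (e *\<^sub>R One)) (e *\<^sub>R One) :: 'a set"
  have vanish0: "\<And>v. v \<notin> cball 0 e \<Longrightarrow> bump (0::'a) e v = 0"
    and vanish: "\<And>v. v \<notin> cball x e \<Longrightarrow> bump x e v = 0"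
    by (meson bump_eq_0[OF e] ball_subset_cball subsetD)+
  have "bump (0::'a) e integrable_on ?B0"
    by (rule integrable_continuous) (rule continuous_on_bump)
  then have B0: "(bump (0::'a) e has_integral integral ?B0 (bump 0 e)) ?B0" by blast
  then have "(bump (0::'a) e has_integral integral ?B0 (bump 0 e)) UNIV"
    using has_integral_UNIV_iff_vanishing_outside[where f="bump 0 e", OF cball_subset_cbox[of 0 e] vanish0] by simp
  then have N: "integral UNIV (bump (0::'a) e) = integral ?B0 (bump 0 e)" by blast
  have "((bump 0 e \<circ> (+) (-x)) has_integral integral ?B0 (bump 0 e))
          (cbox (x - e *\<^sub>R One) (x + e *\<^sub>R One))"
    using has_integral_shift_cbox_iff[of "bump 0 e" "-x" _ "x - e *\<^sub>R One" "x + e *\<^sub>R One"] B0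
    by (simp add: mult.commute)
  moreover have "bump 0 e \<circ> (+) (-x) = bump x e"
    by (simp add: fun_eq_iff bump_def)
  ultimately have "(bump x e has_integral integral ?B0 (bump 0 e)) UNIV"
    using has_integral_UNIV_iff_vanishing_outside[where f="bump x e", OF cball_subset_cbox[of x e] vanish] by simp
  then show ?thesis using N by simp
qed

lemma bump_has_integral_on:
  fixes x :: "'a::euclidean_space"
  assumes "e > 0" "cball x e \<subseteq> S"
  shows "(bump x e has_integral integral UNIV (bump (0::'a) e)) S"
  using has_integral_UNIV_iff_vanishing_outside[OF assms(2), of "bump x e"]
    bump_has_integral[OF assms(1), of x] bump_eq_0[OF assms(1), of _ x] by auto

lemma integral_bump_pos:
  assumes e: "e > 0"
  shows "integral UNIV (bump (0::'a::euclidean_space) e) > 0"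
proof -
  define \<delta> where "\<delta> = e / (2 * DIM('a))"
  have \<delta>: "\<delta> > 0" using e by (simp add: \<delta>_def)
  let ?B = "cbox (- (\<delta> *\<^sub>R One)) (\<delta> *\<^sub>R One) :: 'a set"
  define m where "m = (3 * e\<^sup>2 / 4)\<^sup>2"
  have step: "((\<lambda>v. if v \<in> ?B then m else 0) has_integral (m * measure lborel ?B)) UNIV"
    using has_integral_restrict_UNIV[of ?B "\<lambda>_. m"] has_integral_const[of m "- (\<delta> *\<^sub>R One)" "\<delta> *\<^sub>R One"]
    by (simp add: mult.commute)
  have below: "(if v \<in> ?B then m else 0) \<le> bump 0 e v" for v
  proof (cases "v \<in> ?B")
    case True
    have "norm v \<le> (\<Sum>b\<in>Basis. \<bar>v \<bullet> b\<bar>)" by (rule norm_le_l1)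
    also have "\<dots> \<le> (\<Sum>b\<in>(Basis::'a set). \<delta>)"
      by (rule sum_mono) (use True in \<open>auto simp: mem_box abs_le_iff inner_minus_left\<close>)
    also have "\<dots> = e / 2" using e by (simp add: \<delta>_def)
    finally have "v \<bullet> v \<le> (e/2)\<^sup>2"
      by (simp add: power2_norm_eq_inner[symmetric] power_mono)
    then have le: "3 * e\<^sup>2 / 4 \<le> e\<^sup>2 - v \<bullet> v" by (simp add: power_divide)
    then have "max 0 (e\<^sup>2 - v \<bullet> v) = e\<^sup>2 - v \<bullet> v"
      using zero_le_power2[of e] by linarith
    with le have "m \<le> bump_profile (e\<^sup>2 - v \<bullet> v)"
      unfolding m_def bump_profile_def by (intro power_mono) auto
    then show ?thesis using True by (simp add: bump_def)
  qed (simp add: bump_nonneg)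
  have "m * measure lborel ?B \<le> integral UNIV (bump (0::'a) e)"
    using has_integral_le[OF step bump_has_integral[OF e, of 0]] below by auto
  moreover have "measure lborel ?B > 0"
    by (rule content_pos_lt) (use \<delta> in auto)
  then have "m * measure lborel ?B > 0"
    using e by (simp add: m_def)
  ultimately show ?thesis by linarith
qed

section \<open>Lipschitz bounds from a bounded weak gradient\<close>

lemma AE_lebesgue_negligibleE:
  assumes "AE x in lebesgue. P x"
  obtains N where "negligible N" "\<And>x. x \<notin> N \<Longrightarrow> P x"
proof -
  obtain N where N: "{x \<in> space lebesgue. \<not> P x} \<subseteq> N" "emeasure lebesgue N = 0" "N \<in> sets lebesgue"
    using assms by (rule AE_E)
  then have "negligible N" by (simp add: negligible_iff_null_sets null_setsI)
  with N(1) show thesis using that by auto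
qed

lemma has_integral_abs_le:
  fixes f :: "'a::euclidean_space \<Rightarrow> real"
  assumes "(f has_integral I) S" "(h has_integral J) S" "\<And>v. v \<in> S \<Longrightarrow> \<bar>f v\<bar> \<le> h v"
  shows "\<bar>I\<bar> \<le> J"
  using has_integral_le[OF assms(1,2)] has_integral_le[OF has_integral_neg[OF assms(1)] assms(2)] assms(3)
  by (force simp: abs_le_iff)

lemma weak_gradient_bump_bound:
  fixes w :: "real^'n \<Rightarrow> real" and g :: "real^'n \<Rightarrow> real^'n"
  assumes wg: "weak_gradient_on U w g" and e: "e > 0" and sub: "cball z e \<subseteq> U"
    and N: "negligible N" and bd: "\<And>v. v \<in> ball z e \<Longrightarrow> v \<notin> N \<Longrightarrow> norm (g v) \<le> K" and K: "K \<ge> 0"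
  shows "\<bar>integral U (\<lambda>v. w v * (bump_grad z e v \<bullet> d))\<bar> \<le> K * norm d * integral UNIV (bump (0::real^'n) e)"
proof -
  have parts: "((\<lambda>x. g x $ i * bump z e x) absolutely_integrable_on U) \<and>
        ((\<lambda>x. w x * bump_grad z e x $ i) absolutely_integrable_on U) \<and>
        integral U (\<lambda>x. w x * bump_grad z e x $ i) = - integral U (\<lambda>x. g x $ i * bump z e x)" for i
    using wg test_function_bump[OF e sub] unfolding weak_gradient_on_def by blast
  then have int_w: "(\<lambda>x. w x * bump_grad z e x $ i) integrable_on U"
    and int_g: "(\<lambda>x. g x $ i * bump z e x) integrable_on U" for i
    using set_lebesgue_integral_eq_integral(1) by blast+
  have gd_eq: "(\<lambda>v. \<Sum>i\<in>UNIV. d $ i * (g v $ i * bump z e v)) = (\<lambda>v. (g v \<bullet> d) * bump z e v)"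
    by (simp add: fun_eq_iff inner_vec_def sum_distrib_left sum_distrib_right mult_ac)
  have "integral U (\<lambda>v. w v * (bump_grad z e v \<bullet> d))
      = integral U (\<lambda>v. \<Sum>i\<in>UNIV. d $ i * (w v * bump_grad z e v $ i))"
    by (simp add: inner_vec_def sum_distrib_left mult_ac)
  also have "\<dots> = (\<Sum>i\<in>UNIV. d $ i * integral U (\<lambda>v. w v * bump_grad z e v $ i))"
    by (subst integral_sum) (auto intro!: integrable_on_mult_right int_w)
  also have "\<dots> = - (\<Sum>i\<in>UNIV. d $ i * integral U (\<lambda>v. g v $ i * bump z e v))"
    using parts by (simp add: sum_negf[symmetric])
  also have "(\<Sum>i\<in>UNIV. d $ i * integral U (\<lambda>v. g v $ i * bump z e v))
      = integral U (\<lambda>v. (g v \<bullet> d) * bump z e v)"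
    unfolding gd_eq[symmetric] by (subst integral_sum) (auto intro!: integrable_on_mult_right int_g)
  finally have eq: "\<bar>integral U (\<lambda>v. w v * (bump_grad z e v \<bullet> d))\<bar> = \<bar>integral U (\<lambda>v. (g v \<bullet> d) * bump z e v)\<bar>"
    by simp
  have int_gd: "(\<lambda>v. (g v \<bullet> d) * bump z e v) integrable_on U"
    unfolding gd_eq[symmetric] by (auto intro!: integrable_sum integrable_on_mult_right int_g)
  have "((\<lambda>v. if v \<in> N then 0 else (g v \<bullet> d) * bump z e v) has_integral
      integral U (\<lambda>v. (g v \<bullet> d) * bump z e v)) U"
    by (rule has_integral_spike[OF N _ integrable_integral[OF int_gd]]) auto
  moreover have "((\<lambda>v. K * norm d * bump z e v) has_integral K * norm d * integral UNIV (bump (0::real^'n) e)) U"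
    by (intro has_integral_mult_right bump_has_integral_on e sub)
  moreover have "\<bar>if v \<in> N then 0 else (g v \<bullet> d) * bump z e v\<bar> \<le> K * norm d * bump z e v" for v
  proof (cases "v \<in> N \<or> v \<notin> ball z e")
    case True
    then show ?thesis using bump_nonneg[of z e v] bump_eq_0[OF e, of v z] K by auto
  next
    case False
    then have "\<bar>g v \<bullet> d\<bar> \<le> K * norm d"
      using bd Cauchy_Schwarz_ineq2[of "g v" d] by (meson mult_right_mono norm_ge_zero order_trans)
    then show ?thesis using False bump_nonneg[of z e v] by (auto simp: abs_mult intro: mult_right_mono)
  qed
  ultimately show ?thesis unfolding eq by (rule has_integral_abs_le)
qed

lemma weak_gradient_bump_bound_on:
  fixes w wt :: "real^'n \<Rightarrow> real" and g :: "real^'n \<Rightarrow> real^'n"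
  assumes wg: "weak_gradient_on U w g" and e: "e > 0" and U: "cball z e \<subseteq> U" and T: "cball z e \<subseteq> T"
    and agree: "\<And>v. v \<in> cball z e \<Longrightarrow> wt v = w v"
    and int: "(\<lambda>v. wt v * (bump_grad z e v \<bullet> d)) integrable_on T"
    and N: "negligible N" and bd: "\<And>v. v \<in> ball z e \<Longrightarrow> v \<notin> N \<Longrightarrow> norm (g v) \<le> K" and K: "K \<ge> 0"
  shows "\<bar>integral T (\<lambda>v. wt v * (bump_grad z e v \<bullet> d))\<bar> \<le> K * norm d * integral UNIV (bump (0::real^'n) e)"
proof -
  have vanish: "wt v * (bump_grad z e v \<bullet> d) = 0" if "v \<notin> cball z e" for v
    using bump_grad_eq_0[OF e, of v z] that by auto
  define I where "I = integral T (\<lambda>v. wt v * (bump_grad z e v \<bullet> d))"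
  have fun_eq: "(\<lambda>v. wt v * (bump_grad z e v \<bullet> d)) = (\<lambda>v. w v * (bump_grad z e v \<bullet> d))"
  proof
    fix v show "wt v * (bump_grad z e v \<bullet> d) = w v * (bump_grad z e v \<bullet> d)"
      using agree[of v] bump_grad_eq_0[OF e, of v z] by (cases "v \<in> cball z e") auto
  qed
  have "((\<lambda>v. wt v * (bump_grad z e v \<bullet> d)) has_integral I) U"
    using integrable_integral[OF int] has_integral_UNIV_iff_vanishing_outside[OF T vanish]
      has_integral_UNIV_iff_vanishing_outside[OF U vanish] by (simp add: I_def)
  then have "integral U (\<lambda>v. w v * (bump_grad z e v \<bullet> d)) = I"
    unfolding fun_eq by (rule integral_unique)
  moreover have "\<bar>integral U (\<lambda>v. w v * (bump_grad z e v \<bullet> d))\<bar> \<le> K * norm d * integral UNIV (bump (0::real^'n) e)"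
    by (rule weak_gradient_bump_bound[OF wg e U N bd K])
  ultimately show ?thesis by (simp add: I_def)
qed

lemma integral_bump_approx:
  fixes w :: "real^'n \<Rightarrow> real"
  assumes e: "e > 0" and close: "\<And>v. v \<in> cball x e \<Longrightarrow> \<bar>w v - w x\<bar> \<le> \<epsilon>"
    and cont: "continuous_on UNIV w" and B: "cball x e \<subseteq> cbox a b"
  shows "\<bar>integral (cbox a b) (\<lambda>v. w v * bump x e v) - integral UNIV (bump (0::real^'n) e) * w x\<bar>
          \<le> \<epsilon> * integral UNIV (bump (0::real^'n) e)"
proof -
  let ?N = "integral UNIV (bump (0::real^'n) e)"
  have bI: "(bump x e has_integral ?N) (cbox a b)"
    by (rule bump_has_integral_on[OF e B])
  have wI: "(\<lambda>v. w v * bump x e v) integrable_on cbox a b"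
    by (intro integrable_continuous continuous_intros continuous_on_subset[OF cont] continuous_on_bump) simp
  have "((\<lambda>v. w v * bump x e v - w x * bump x e v) has_integral
          integral (cbox a b) (\<lambda>v. w v * bump x e v) - w x * ?N) (cbox a b)"
    by (intro has_integral_diff has_integral_mult_right bI) (use wI in blast)
  moreover have "((\<lambda>v. \<epsilon> * bump x e v) has_integral \<epsilon> * ?N) (cbox a b)"
    by (intro has_integral_mult_right bI)
  moreover have "\<bar>w v * bump x e v - w x * bump x e v\<bar> \<le> \<epsilon> * bump x e v" for v
  proof (cases "v \<in> cball x e")
    case True
    have "\<bar>w v * bump x e v - w x * bump x e v\<bar> = \<bar>w v - w x\<bar> * bump x e v"
      using bump_nonneg[of x e v] by (simp add: left_diff_distrib[symmetric] abs_mult)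
    also have "\<dots> \<le> \<epsilon> * bump x e v"
      using close[OF True] bump_nonneg[of x e v] by (rule mult_right_mono)
    finally show ?thesis .
  qed (use bump_eq_0[OF e, of v x] in auto)
  ultimately have "\<bar>integral (cbox a b) (\<lambda>v. w v * bump x e v) - w x * ?N\<bar> \<le> \<epsilon> * ?N"
    by (rule has_integral_abs_le)
  then show ?thesis by (simp add: mult.commute)
qed

text \<open>Differentiating the mollification \<open>s \<mapsto> \<integral> w \<cdot> bump (x + s(y - x)) e\<close> under the integral sign
  and integrating by parts turns its derivative into an integral of the weak gradient against the bump.\<close>

lemma mollified_segment_increment:
  fixes w wt :: "real^'n \<Rightarrow> real" and g :: "real^'n \<Rightarrow> real^'n"
  assumes wg: "weak_gradient_on U w g" and e: "e > 0"
    and wt: "continuous_on UNIV wt" "\<And>v. v \<in> S \<Longrightarrow> wt v = w v"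
    and seg: "\<And>s. s \<in> {0..1} \<Longrightarrow> cball (x + s *\<^sub>R (y - x)) e \<subseteq> S"
    and S: "S \<subseteq> U" "S \<subseteq> cbox a b"
    and N: "negligible N" and bd: "\<And>v. v \<in> S \<Longrightarrow> v \<notin> N \<Longrightarrow> norm (g v) \<le> K" and K: "K \<ge> 0"
  shows "\<bar>integral (cbox a b) (\<lambda>v. wt v * bump y e v) - integral (cbox a b) (\<lambda>v. wt v * bump x e v)\<bar>
           \<le> K * norm (y - x) * integral UNIV (bump (0::real^'n) e)"
proof -
  define z where "z s = x + s *\<^sub>R (y - x)" for s
  define F where "F s = integral (cbox a b) (\<lambda>v. wt v * bump (z s) e v)" for s
  define F' where "F' s = integral (cbox a b) (\<lambda>v. wt v * - (bump_grad (z s) e v \<bullet> (y - x)))" for s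
  have F: "(F has_real_derivative F' s) (at s)" for s
    unfolding F_def F'_def
  proof (rule leibniz_rule_field_derivative[where U=UNIV, simplified])
    show "((\<lambda>s. wt v * bump (z s) e v) has_real_derivative wt v * - (bump_grad (z s') e v \<bullet> (y - x))) (at s')"
      for s' v
      unfolding z_def by (intro DERIV_cmult bump_translate_has_real_derivative)
    show "(\<lambda>v. wt v * bump (z s') e v) integrable_on cbox a b" for s'
      by (intro integrable_continuous continuous_intros continuous_on_subset[OF wt(1)] continuous_on_bump) simp
    show "continuous_on (UNIV \<times> cbox a b) (\<lambda>(s, v). wt v * - (bump_grad (z s) e v \<bullet> (y - x)))"
      unfolding z_def bump_grad_def split_beta
      by (intro continuous_intros continuous_on_compose2[OF wt(1)]) auto
  qed
  have F'_bound: "\<bar>F' s\<bar> \<le> K * norm (y - x) * integral UNIV (bump (0::real^'n) e)" if s: "s \<in> {0..1}" for s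
  proof -
    have "\<bar>F' s\<bar> = \<bar>integral (cbox a b) (\<lambda>v. wt v * (bump_grad (z s) e v \<bullet> (y - x)))\<bar>"
      by (simp add: F'_def integral_neg)
    also have "\<dots> \<le> K * norm (y - x) * integral UNIV (bump (0::real^'n) e)"
    proof (rule weak_gradient_bump_bound_on[OF wg e _ _ _ _ N _ K])
      show "cball (z s) e \<subseteq> U" "cball (z s) e \<subseteq> cbox a b" using seg[OF s] S by (auto simp: z_def)
      show "wt v = w v" if "v \<in> cball (z s) e" for v using that seg[OF s] wt(2) by (auto simp: z_def)
      show "(\<lambda>v. wt v * (bump_grad (z s) e v \<bullet> (y - x))) integrable_on cbox a b"
        unfolding bump_grad_def by (intro integrable_continuous continuous_intros continuous_on_subset[OF wt(1)]) simp
      show "norm (g v) \<le> K" if "v \<in> ball (z s) e" "v \<notin> N" for v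
        using that seg[OF s] bd ball_subset_cball[of "z s" e] unfolding z_def by blast
    qed
    finally show ?thesis .
  qed
  obtain \<xi> where "0 < \<xi>" "\<xi> < 1" "F 1 - F 0 = (1 - 0) * F' \<xi>"
    using MVT2[of 0 1 F F'] F by auto
  then show ?thesis using F'_bound[of \<xi>] by (simp add: F_def z_def)
qed

lemma weak_gradient_increment_estimate:
  fixes w wt :: "real^'n \<Rightarrow> real" and g :: "real^'n \<Rightarrow> real^'n"
  assumes wg: "weak_gradient_on U w g" and e: "e > 0"
    and wt: "continuous_on UNIV wt" "\<And>v. v \<in> S \<Longrightarrow> wt v = w v"
    and seg: "\<And>s. s \<in> {0..1} \<Longrightarrow> cball (x + s *\<^sub>R (y - x)) e \<subseteq> S"
    and S: "S \<subseteq> U" "S \<subseteq> cbox a b"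
    and N: "negligible N" and bd: "\<And>v. v \<in> S \<Longrightarrow> v \<notin> N \<Longrightarrow> norm (g v) \<le> K" and K: "K \<ge> 0"
    and close: "\<And>p v. p \<in> {x, y} \<Longrightarrow> dist v p \<le> e \<Longrightarrow> \<bar>w v - w p\<bar> \<le> \<delta>"
  shows "\<bar>w x - w y\<bar> \<le> K * norm (x - y) + 2 * \<delta>"
proof -
  let ?F = "\<lambda>p. integral (cbox a b) (\<lambda>v. wt v * bump p e v)"
  let ?N = "integral UNIV (bump (0::real^'n) e)"
  have approx: "\<bar>?F p - ?N * w p\<bar> \<le> \<delta> * ?N" if p: "p \<in> {x, y}" for p
  proof -
    have cb: "cball p e \<subseteq> S" using seg[of 0] seg[of 1] p by auto
    then have "wt v = w v" if "v \<in> cball p e" for v using that wt(2) by blast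
    then have "\<bar>?F p - ?N * wt p\<bar> \<le> \<delta> * ?N"
      using cb S(2) close[OF p] e
      by (intro integral_bump_approx[OF e _ wt(1)]) (auto simp: dist_commute)
    moreover have "wt p = w p" using cb e by (intro wt(2)) (auto simp: subset_iff)
    ultimately show ?thesis by simp
  qed
  have "\<bar>?F y - ?F x\<bar> \<le> K * norm (y - x) * ?N"
    by (rule mollified_segment_increment[OF wg e wt seg S N bd K])
  moreover have N: "?N > 0" by (rule integral_bump_pos[OF e])
  ultimately have "\<bar>w x * ?N - w y * ?N\<bar> \<le> (K * norm (x - y) + 2 * \<delta>) * ?N"
    using approx[of x] approx[of y] by (simp add: abs_le_iff norm_minus_commute algebra_simps)
  then show ?thesis
    using N by (simp add: left_diff_distrib[symmetric] abs_mult)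
qed

lemma weak_gradient_lipschitz_on_ball:
  fixes w :: "real^'n \<Rightarrow> real" and g :: "real^'n \<Rightarrow> real^'n"
  assumes wg: "weak_gradient_on U w g" and cw: "continuous_on U w" and sub: "ball z0 R \<subseteq> U"
    and bd: "AE v in lebesgue. v \<in> ball z0 R \<longrightarrow> norm (g v) \<le> K" and K: "K \<ge> 0"
    and x: "x \<in> ball z0 R" and y: "y \<in> ball z0 R"
  shows "\<bar>w x - w y\<bar> \<le> K * norm (x - y)"
proof (rule field_le_epsilon)
  fix gap :: real assume gap: "gap > 0"
  obtain N where N: "negligible N" "\<And>v. v \<notin> N \<Longrightarrow> v \<in> ball z0 R \<Longrightarrow> norm (g v) \<le> K"
    using bd by (rule AE_lebesgue_negligibleE) blast
  define M where "M = max (dist z0 x) (dist z0 y)"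
  define R' where "R' = (M + R) / 2"
  have MR': "M < R'" "R' < R" using x y by (auto simp: M_def R'_def)
  have "isCont w p" if "p \<in> ball z0 R" for p
    using continuous_on_subset[OF cw sub] that continuous_on_eq_continuous_at[OF open_ball] by blast
  then obtain e1 e2 where e1: "e1 > 0" "\<And>v. dist v x < e1 \<Longrightarrow> \<bar>w v - w x\<bar> < gap / 2"
    and e2: "e2 > 0" "\<And>v. dist v y < e2 \<Longrightarrow> \<bar>w v - w y\<bar> < gap / 2"
    using x y gap unfolding continuous_at_eps_delta dist_real_def by (metis half_gt_zero)
  define e where "e = min (min (e1/2) (e2/2)) ((R' - M) / 2)"
  have "e \<le> (R' - M) / 2" unfolding e_def by linarith
  then have e: "e > 0" "e < e1" "e < e2" "M + e < R'" using e1 e2 MR' by (auto simp: e_def)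
  have seg: "cball (x + s *\<^sub>R (y - x)) e \<subseteq> cball z0 R'" if "s \<in> {0..1}" for s
  proof -
    have "(1 - s) *\<^sub>R x + s *\<^sub>R y \<in> cball z0 M"
      using that convex_cball[of z0 M] unfolding convex_def by (auto simp: M_def)
    then have "dist z0 (x + s *\<^sub>R (y - x)) \<le> M" by (simp add: algebra_simps)
    then show ?thesis
      using e(4) dist_triangle[of z0 _ "x + s *\<^sub>R (y - x)"] by (smt (verit) mem_cball subsetI)
  qed
  have "cball z0 R' \<subseteq> ball z0 R" using MR'(2) by (simp add: cball_subset_ball_iff)
  then have R'U: "cball z0 R' \<subseteq> U" using sub by blast
  obtain wt where wt: "continuous_on UNIV wt" "\<And>v. v \<in> cball z0 R' \<Longrightarrow> wt v = w v"
    using Tietze_unbounded[of "cball z0 R'" w UNIV] continuous_on_subset[OF cw R'U] by auto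
  have "\<bar>w x - w y\<bar> \<le> K * norm (x - y) + 2 * (gap / 2)"
  proof (rule weak_gradient_increment_estimate[OF wg e(1) wt seg R'U cball_subset_cbox N(1) _ K])
    show "norm (g v) \<le> K" if "v \<in> cball z0 R'" "v \<notin> N" for v
      using that N(2) MR' by auto
    show "\<bar>w v - w p\<bar> \<le> gap / 2" if "p \<in> {x, y}" "dist v p \<le> e" for p v
      using that e e1(2)[of v] e2(2)[of v] by auto
  qed
  then show "\<bar>w x - w y\<bar> \<le> K * norm (x - y) + gap" by simp
qed

lemma weak_gradient_local_lipschitz:
  fixes w :: "real^'n \<Rightarrow> real" and g :: "real^'n \<Rightarrow> real^'n" and k :: "real^'n \<Rightarrow> real"
  assumes W: "W1inf_grad U w g" and U: "open U" and k: "continuous_on UNIV k"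
    and bd: "AE v in lebesgue. v \<in> U \<longrightarrow> norm (g v) \<le> k v" and k_nonneg: "\<And>v. k v \<ge> 0"
    and x: "x \<in> U" and \<epsilon>: "\<epsilon> > 0"
  shows "\<exists>r>0. \<forall>y\<in>ball x r. \<forall>z\<in>ball x r. \<bar>w y - w z\<bar> \<le> (k x + \<epsilon>) * norm (y - z)"
proof -
  obtain r1 where r1: "r1 > 0" "ball x r1 \<subseteq> U" using U x open_contains_ball by blast
  obtain r2 where r2: "r2 > 0" "\<And>v. dist v x < r2 \<Longrightarrow> \<bar>k v - k x\<bar> < \<epsilon>"
    using k \<epsilon> unfolding continuous_on_eq_continuous_at[OF open_UNIV] continuous_at_eps_delta
    by (metis UNIV_I dist_real_def)
  define r where "r = min r1 r2"
  have r: "r > 0" "ball x r \<subseteq> U" using r1 r2 by (auto simp: r_def)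
  have "AE v in lebesgue. v \<in> ball x r \<longrightarrow> norm (g v) \<le> k x + \<epsilon>"
    using bd by eventually_elim (use r r2 in \<open>force simp: r_def dist_commute\<close>)
  then show ?thesis
    using weak_gradient_lipschitz_on_ball[of U w g x r] W r k_nonneg[of x] \<epsilon>
    by (auto simp: W1inf_grad_def)
qed

lemma weak_gradient_lipschitz_near_compact:
  fixes w :: "real^'n \<Rightarrow> real" and g :: "real^'n \<Rightarrow> real^'n" and k :: "real^'n \<Rightarrow> real"
  assumes W: "W1inf_grad U w g" and U: "open U" and k: "continuous_on UNIV k"
    and bd: "AE v in lebesgue. v \<in> U \<longrightarrow> norm (g v) \<le> k v" and k_nonneg: "\<And>v. k v \<ge> 0"
    and C: "compact C" "C \<subseteq> U"
  obtains r L where "r > 0" "L \<ge> 0"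
    "\<And>x y z. x \<in> C \<Longrightarrow> y \<in> ball x r \<Longrightarrow> z \<in> ball x r \<Longrightarrow> \<bar>w y - w z\<bar> \<le> L * norm (y - z)"
proof -
  obtain R where R: "\<And>x. x \<in> C \<Longrightarrow> R x > 0 \<and>
      (\<forall>y\<in>ball x (R x). \<forall>z\<in>ball x (R x). \<bar>w y - w z\<bar> \<le> (k x + 1) * norm (y - z))"
    using weak_gradient_local_lipschitz[OF W U k bd k_nonneg _ zero_less_one] C(2) by (metis subsetD)
  obtain r where r: "r > 0" "\<And>x. x \<in> C \<Longrightarrow> \<exists>G \<in> (\<lambda>x. ball x (R x)) ` C. ball x r \<subseteq> G"
    by (rule Heine_Borel_lemma[OF C(1), of "(\<lambda>x. ball x (R x)) ` C"]) (use R in force)+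
  have "bounded (k ` C)"
    using compact_imp_bounded[OF compact_continuous_image[OF continuous_on_subset[OF k subset_UNIV] C(1)]] .
  then obtain L where "\<forall>x\<in>k ` C. norm x \<le> L"
    unfolding bounded_iff by blast
  then have L: "\<And>x. x \<in> C \<Longrightarrow> k x \<le> L" by auto
  show thesis
  proof (rule that[OF r(1)])
    show "max 0 L + 1 \<ge> 0" by simp
    fix x y z assume "x \<in> C" "y \<in> ball x r" "z \<in> ball x r"
    then obtain x' where x': "x' \<in> C" "y \<in> ball x' (R x')" "z \<in> ball x' (R x')" using r(2) by blast
    then have "\<bar>w y - w z\<bar> \<le> (k x' + 1) * norm (y - z)" using R by blast
    also have "\<dots> \<le> (max 0 L + 1) * norm (y - z)"
      using L[OF x'(1)] by (intro mult_right_mono) auto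
    finally show "\<bar>w y - w z\<bar> \<le> (max 0 L + 1) * norm (y - z)" .
  qed
qed

section \<open>Absolutely continuous curves\<close>

lemma AC_curve_subinterval:
  assumes "AC_curve a b U \<eta>" "a \<le> s" "t \<le> b"
  shows "AC_curve s t UNIV \<eta>"
  unfolding AC_curve_def
proof (intro conjI allI impI)
  fix \<epsilon> :: real assume "\<epsilon> > 0"
  then obtain \<delta> where \<delta>: "\<delta> > 0" "\<forall>D. finite D \<and> (\<forall>(s,t)\<in>D. a \<le> s \<and> s < t \<and> t \<le> b) \<and>
        pairwise (\<lambda>(s,t) (s',t'). {s<..<t} \<inter> {s'<..<t'} = {}) D \<and>
        (\<Sum>(s,t)\<in>D. t - s) < \<delta> \<longrightarrow> (\<Sum>(s,t)\<in>D. norm (\<eta> t - \<eta> s)) < \<epsilon>"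
    using assms(1) unfolding AC_curve_def by meson
  show "\<exists>\<delta>>0. \<forall>D. finite D \<and> (\<forall>(s',t')\<in>D. s \<le> s' \<and> s' < t' \<and> t' \<le> t) \<and>
        pairwise (\<lambda>(s,t) (s',t'). {s<..<t} \<inter> {s'<..<t'} = {}) D \<and>
        (\<Sum>(s,t)\<in>D. t - s) < \<delta> \<longrightarrow> (\<Sum>(s,t)\<in>D. norm (\<eta> t - \<eta> s)) < \<epsilon>"
  proof (intro exI[of _ \<delta>] conjI allI impI)
    fix D :: "(real \<times> real) set"
    assume D: "finite D \<and> (\<forall>(s',t')\<in>D. s \<le> s' \<and> s' < t' \<and> t' \<le> t) \<and>
        pairwise (\<lambda>(s,t) (s',t'). {s<..<t} \<inter> {s'<..<t'} = {}) D \<and> (\<Sum>(s,t)\<in>D. t - s) < \<delta>"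
    then have "\<forall>(s',t')\<in>D. a \<le> s' \<and> s' < t' \<and> t' \<le> b" using assms(2,3) by auto
    then show "(\<Sum>(s,t)\<in>D. norm (\<eta> t - \<eta> s)) < \<epsilon>" using \<delta>(2) D by blast
  qed (use \<delta> in auto)
qed auto

lemma AC_curve_imp_continuous_on:
  assumes AC: "AC_curve a b U \<eta>"
  shows "continuous_on {a..b} \<eta>"
  unfolding continuous_on_iff
proof (intro ballI allI impI)
  fix x \<epsilon> :: real assume x: "x \<in> {a..b}" and \<epsilon>: "\<epsilon> > 0"
  obtain \<delta> where \<delta>: "\<delta> > 0" "\<And>D. finite D \<Longrightarrow> (\<forall>(s,t)\<in>D. a \<le> s \<and> s < t \<and> t \<le> b) \<Longrightarrow>
        pairwise (\<lambda>(s,t) (s',t'). {s<..<t} \<inter> {s'<..<t'} = {}) D \<Longrightarrow>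
        (\<Sum>(s,t)\<in>D. t - s) < \<delta> \<Longrightarrow> (\<Sum>(s,t)\<in>D. norm (\<eta> t - \<eta> s)) < \<epsilon>"
    using AC \<epsilon> unfolding AC_curve_def by meson
  have "dist (\<eta> y) (\<eta> x) < \<epsilon>" if y: "y \<in> {a..b}" "dist y x < \<delta>" for y
  proof (cases "y = x")
    case False
    have "(\<Sum>(s,t)\<in>{(min x y, max x y)}. norm (\<eta> t - \<eta> s)) < \<epsilon>"
      by (rule \<delta>(2)) (use x y False in \<open>auto simp: dist_real_def min_def max_def\<close>)
    then show ?thesis
      by (cases "x \<le> y") (auto simp: min_def max_def dist_norm norm_minus_commute)
  qed (use \<epsilon> in simp)
  then show "\<exists>d>0. \<forall>y\<in>{a..b}. dist y x < d \<longrightarrow> dist (\<eta> y) (\<eta> x) < \<epsilon>"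
    using \<delta>(1) by blast
qed

lemma AC_curve_compose_lipschitz:
  fixes \<eta> :: "real \<Rightarrow> 'a::real_normed_vector" and \<phi> :: "'a \<Rightarrow> real"
  assumes AC: "AC_curve a b U \<eta>" and r: "r > 0" and L: "L \<ge> 0"
    and lip: "\<And>x y z. x \<in> \<eta> ` {a..b} \<Longrightarrow> y \<in> ball x r \<Longrightarrow> z \<in> ball x r \<Longrightarrow> \<bar>\<phi> y - \<phi> z\<bar> \<le> L * norm (y - z)"
  shows "AC_curve a b UNIV (\<phi> \<circ> \<eta>)"
  unfolding AC_curve_def
proof (intro conjI allI impI)
  fix \<epsilon> :: real assume \<epsilon>: "\<epsilon> > 0"
  define \<epsilon>' where "\<epsilon>' = min r (\<epsilon> / (L + 1))"
  have \<epsilon>': "\<epsilon>' > 0" "\<epsilon>' \<le> r" "L * \<epsilon>' < \<epsilon>"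
  proof -
    show "\<epsilon>' > 0" "\<epsilon>' \<le> r" using r \<epsilon> L by (auto simp: \<epsilon>'_def)
    have "L * \<epsilon>' \<le> L * (\<epsilon> / (L + 1))" using L by (intro mult_left_mono) (auto simp: \<epsilon>'_def)
    also have "\<dots> < \<epsilon>" using L \<epsilon> by (simp add: field_simps)
    finally show "L * \<epsilon>' < \<epsilon>" .
  qed
  obtain \<delta> where \<delta>: "\<delta> > 0" "\<And>D. finite D \<Longrightarrow> (\<forall>(s,t)\<in>D. a \<le> s \<and> s < t \<and> t \<le> b) \<Longrightarrow>
        pairwise (\<lambda>(s,t) (s',t'). {s<..<t} \<inter> {s'<..<t'} = {}) D \<Longrightarrow>
        (\<Sum>(s,t)\<in>D. t - s) < \<delta> \<Longrightarrow> (\<Sum>(s,t)\<in>D. norm (\<eta> t - \<eta> s)) < \<epsilon>'"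
    using AC \<epsilon>'(1) unfolding AC_curve_def by meson
  have "(\<Sum>(s,t)\<in>D. norm ((\<phi> \<circ> \<eta>) t - (\<phi> \<circ> \<eta>) s)) < \<epsilon>"
    if D: "finite D" "\<forall>(s,t)\<in>D. a \<le> s \<and> s < t \<and> t \<le> b"
      "pairwise (\<lambda>(s,t) (s',t'). {s<..<t} \<inter> {s'<..<t'} = {}) D" "(\<Sum>(s,t)\<in>D. t - s) < \<delta>" for D
  proof -
    have S: "(\<Sum>(s,t)\<in>D. norm (\<eta> t - \<eta> s)) < \<epsilon>'" using \<delta>(2)[OF D] .
    have each: "\<bar>\<phi> (\<eta> t) - \<phi> (\<eta> s)\<bar> \<le> L * norm (\<eta> t - \<eta> s)" if st: "(s, t) \<in> D" for s t
    proof -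
      have "norm (\<eta> t - \<eta> s) \<le> (\<Sum>(s,t)\<in>D. norm (\<eta> t - \<eta> s))"
        using member_le_sum[of "(s,t)" D "\<lambda>(s,t). norm (\<eta> t - \<eta> s)"] st D by auto
      then have "norm (\<eta> t - \<eta> s) < r" using S \<epsilon>'(2) by linarith
      moreover have "\<eta> s \<in> \<eta> ` {a..b}" using st D by auto
      ultimately show ?thesis using lip[of "\<eta> s" "\<eta> t" "\<eta> s"] r by (auto simp: dist_norm norm_minus_commute)
    qed
    have "(\<Sum>(s,t)\<in>D. norm ((\<phi> \<circ> \<eta>) t - (\<phi> \<circ> \<eta>) s)) \<le> (\<Sum>(s,t)\<in>D. L * norm (\<eta> t - \<eta> s))"
      by (rule sum_mono) (use each in auto)
    also have "\<dots> = L * (\<Sum>(s,t)\<in>D. norm (\<eta> t - \<eta> s))" by (simp add: sum_distrib_left case_prod_unfold)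
    also have "\<dots> \<le> L * \<epsilon>'" using S L by (intro mult_left_mono) auto
    finally show ?thesis using \<epsilon>'(3) by linarith
  qed
  then show "\<exists>\<delta>>0. \<forall>D. finite D \<and> (\<forall>(s,t)\<in>D. a \<le> s \<and> s < t \<and> t \<le> b) \<and>
        pairwise (\<lambda>(s,t) (s',t'). {s<..<t} \<inter> {s'<..<t'} = {}) D \<and>
        (\<Sum>(s,t)\<in>D. t - s) < \<delta> \<longrightarrow> (\<Sum>(s,t)\<in>D. norm ((\<phi> \<circ> \<eta>) t - (\<phi> \<circ> \<eta>) s)) < \<epsilon>"
    using \<delta>(1) by blast
qed auto

lemma tagged_division_of_real_interval:
  assumes "p tagged_division_of {a..b::real}" "(t, K) \<in> p"
  shows "K = {Inf K..Sup K}" "Inf K \<le> t" "t \<le> Sup K" "a \<le> Inf K" "Sup K \<le> b"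
    and "measure lborel K = Sup K - Inf K"
proof -
  obtain u v where K: "K = cbox u v" using tagged_division_ofD(4)[OF assms] by blast
  moreover have "t \<in> K" "K \<subseteq> {a..b}" using tagged_division_ofD(2,3)[OF assms] .
  ultimately have "u \<le> t" "t \<le> v" "a \<le> u" "v \<le> b" by auto
  with K show "K = {Inf K..Sup K}" "Inf K \<le> t" "t \<le> Sup K" "a \<le> Inf K" "Sup K \<le> b"
    and "measure lborel K = Sup K - Inf K" by auto
qed

lemma tagged_division_of_real_disjoint:
  assumes "p tagged_division_of {a..b::real}" "(t1, K1) \<in> p" "(t2, K2) \<in> p" "(t1, K1) \<noteq> (t2, K2)"
  shows "{Inf K1<..<Sup K1} \<inter> {Inf K2<..<Sup K2} = {}"
  using tagged_division_ofD(5)[OF assms]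
    tagged_division_of_real_interval(1)[OF assms(1,2)] tagged_division_of_real_interval(1)[OF assms(1,3)]
  by (metis interior_atLeastAtMost_real)

lemma tagged_division_nondegenerate_endpoints:
  assumes p: "p tagged_division_of {a..b::real}" and q: "q \<subseteq> p"
  defines "D \<equiv> (\<lambda>(t, K). (Inf K, Sup K)) ` {(t, K) \<in> q. Inf K < Sup K}"
  shows "finite D" "\<forall>(s,t)\<in>D. a \<le> s \<and> s < t \<and> t \<le> b"
    "pairwise (\<lambda>(s,t) (s',t'). {s<..<t} \<inter> {s'<..<t'} = {}) D"
    "\<And>f. (\<And>s. f s s = 0) \<Longrightarrow> (\<Sum>(s,t)\<in>D. f s t) = (\<Sum>(t,K)\<in>q. f (Inf K) (Sup K))"
proof -
  note ivl = tagged_division_of_real_interval[OF p]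
  define q' where "q' = {(t, K) \<in> q. Inf K < Sup K}"
  define h where "h = (\<lambda>(t::real, K::real set). (Inf K, Sup K))"
  have D: "D = h ` q'" by (simp add: D_def h_def q'_def)
  have q'q: "q' \<subseteq> q" by (auto simp: q'_def)
  have "finite q" using p q by (meson tagged_division_of_finite finite_subset)
  then have fin: "finite q" "finite q'" using q'q finite_subset by auto
  then show "finite D" by (simp add: D)
  have disj: "{Inf K1<..<Sup K1} \<inter> {Inf K2<..<Sup K2} = {}"
    if "(t1, K1) \<in> q'" "(t2, K2) \<in> q'" "(t1, K1) \<noteq> (t2, K2)" for t1 K1 t2 K2
    using tagged_division_of_real_disjoint[OF p] that q q'q by blast
  show "\<forall>(s,t)\<in>D. a \<le> s \<and> s < t \<and> t \<le> b"
    using ivl q q'q by (fastforce simp: D h_def q'_def)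
  show "pairwise (\<lambda>(s,t) (s',t'). {s<..<t} \<inter> {s'<..<t'} = {}) D"
    using disj by (fastforce simp: D pairwise_def h_def)
  have inj: "inj_on h q'"
  proof (rule inj_onI, rule ccontr)
    fix q1 q2 assume "q1 \<in> q'" "q2 \<in> q'" "h q1 = h q2" "q1 \<noteq> q2"
    then show False
      using disj[of "fst q1" "snd q1" "fst q2" "snd q2"] by (auto simp: h_def q'_def dest: dense)
  qed
  fix f :: "real \<Rightarrow> real \<Rightarrow> 'b::comm_monoid_add" assume f: "\<And>s. f s s = 0"
  have "(\<Sum>(t,K)\<in>q. f (Inf K) (Sup K)) = (\<Sum>(t,K)\<in>q'. f (Inf K) (Sup K))"
  proof (intro sum.mono_neutral_right[OF fin(1) q'q] ballI)
    fix i assume "i \<in> q - q'"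
    then obtain t K where tK: "i = (t, K)" "(t, K) \<in> p" "\<not> Inf K < Sup K"
      using q by (auto simp: q'_def)
    then have "Inf K = Sup K" using ivl(2,3)[of t K] by linarith
    then show "(case i of (t, K) \<Rightarrow> f (Inf K) (Sup K)) = 0" by (simp add: tK f)
  qed
  then show "(\<Sum>(s,t)\<in>D. f s t) = (\<Sum>(t,K)\<in>q. f (Inf K) (Sup K))"
    unfolding D sum.reindex[OF inj] by (simp add: h_def case_prod_unfold)
qed

lemma AC_curve_tagged_division_sum:
  assumes AC: "AC_curve a b U F" and \<epsilon>: "\<epsilon> > 0"
  obtains \<delta> where "\<delta> > 0"
    "\<And>p q. p tagged_division_of {a..b} \<Longrightarrow> q \<subseteq> p \<Longrightarrow> (\<Sum>(t,K)\<in>q. measure lborel K) < \<delta> \<Longrightarrow>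
       (\<Sum>(t,K)\<in>q. norm (F (Sup K) - F (Inf K))) < \<epsilon>"
proof -
  obtain \<delta> where \<delta>: "\<delta> > 0" "\<And>D. finite D \<Longrightarrow> (\<forall>(s,t)\<in>D. a \<le> s \<and> s < t \<and> t \<le> b) \<Longrightarrow>
        pairwise (\<lambda>(s,t) (s',t'). {s<..<t} \<inter> {s'<..<t'} = {}) D \<Longrightarrow>
        (\<Sum>(s,t)\<in>D. t - s) < \<delta> \<Longrightarrow> (\<Sum>(s,t)\<in>D. norm (F t - F s)) < \<epsilon>"
    using AC \<epsilon> unfolding AC_curve_def by meson
  have "(\<Sum>(t,K)\<in>q. norm (F (Sup K) - F (Inf K))) < \<epsilon>"
    if p: "p tagged_division_of {a..b}" and q: "q \<subseteq> p" and small: "(\<Sum>(t,K)\<in>q. measure lborel K) < \<delta>" for p q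
  proof -
    note D = tagged_division_nondegenerate_endpoints[OF p q]
    have "(\<Sum>(t,K)\<in>q. Sup K - Inf K) = (\<Sum>(t,K)\<in>q. measure lborel K)"
      using tagged_division_of_real_interval(6)[OF p] q by (intro sum.cong) auto
    then show ?thesis
      using \<delta>(2)[OF D(1-3)] small D(4)[of "\<lambda>s t. t - s"] D(4)[of "\<lambda>s t. norm (F t - F s)"] by simp
  qed
  with \<delta>(1) show thesis using that by blast
qed

lemma tagged_division_increment_sum_le:
  fixes F f :: "real \<Rightarrow> real"
  assumes ab: "a \<le> b" and p: "p tagged_division_of {a..b}" and q: "q \<subseteq> p"
    and loc: "\<And>t K u. (t, K) \<in> q \<Longrightarrow> u \<in> K \<Longrightarrow> \<bar>F u - F t\<bar> \<le> (f t + \<epsilon>) * \<bar>u - t\<bar>"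
    and f_nonneg: "\<And>t. t \<in> {a..b} \<Longrightarrow> f t \<ge> 0" and \<epsilon>: "\<epsilon> \<ge> 0"
  shows "(\<Sum>(t,K)\<in>q. F (Sup K) - F (Inf K)) \<le> (\<Sum>(t,K)\<in>p. measure lborel K * f t) + \<epsilon> * (b - a)"
proof -
  note ivl = tagged_division_of_real_interval[OF p]
  have fin: "finite p" using p by blast
  have "F (Sup K) - F (Inf K) \<le> (f t + \<epsilon>) * measure lborel K" if tK: "(t, K) \<in> q" for t K
  proof -
    have "Inf K \<in> K" "Sup K \<in> K" "Inf K \<le> t" "t \<le> Sup K"
      using ivl(1-3)[of t K] tK q by (metis atLeastAtMost_iff order.refl order.trans subsetD)+
    then show ?thesis
      using loc[OF tK, of "Inf K"] loc[OF tK, of "Sup K"] unfolding ivl(6)[of t K, OF subsetD[OF q tK]]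
      by (smt (verit, best) right_diff_distrib)
  qed
  then have "(\<Sum>(t,K)\<in>q. F (Sup K) - F (Inf K)) \<le> (\<Sum>(t,K)\<in>q. measure lborel K * f t) + \<epsilon> * (\<Sum>(t,K)\<in>q. measure lborel K)"
    by (auto simp: sum_distrib_left sum.distrib[symmetric] case_prod_unfold algebra_simps intro!: sum_mono)
  moreover have "(\<Sum>(t,K)\<in>q. measure lborel K * f t) \<le> (\<Sum>(t,K)\<in>p. measure lborel K * f t)"
    "(\<Sum>(t,K)\<in>q. measure lborel K) \<le> (\<Sum>(t,K)\<in>p. measure lborel K)"
    using q ivl(2-5) f_nonneg
    by (auto intro!: sum_mono2[OF fin] mult_nonneg_nonneg) (meson atLeastAtMost_iff order_trans)
  moreover have "(\<Sum>(t,K)\<in>p. measure lborel K) = b - a"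
    using additive_content_tagged_division[of p a b] p ab by (simp add: box_real)
  ultimately show ?thesis using \<epsilon> by (smt (verit) mult_left_mono)
qed

text \<open>Tags outside the null set are controlled by the local bound, the remaining ones by absolute
  continuity.\<close>

lemma AC_increment_le_integral:
  fixes F f :: "real \<Rightarrow> real"
  assumes ab: "a \<le> b" and AC: "AC_curve a b UNIV F" and N: "negligible N"
    and loc: "\<And>t \<epsilon>. t \<in> {a..b} \<Longrightarrow> t \<notin> N \<Longrightarrow> \<epsilon> > 0 \<Longrightarrow>
               \<exists>\<delta>>0. \<forall>u. \<bar>u - t\<bar> < \<delta> \<longrightarrow> \<bar>F u - F t\<bar> \<le> (f t + \<epsilon>) * \<bar>u - t\<bar>"
    and f_nonneg: "\<And>t. t \<in> {a..b} \<Longrightarrow> f t \<ge> 0"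
    and f: "(f has_integral I) {a..b}"
  shows "F b - F a \<le> I"
proof (rule field_le_epsilon)
  fix \<epsilon>' :: real assume "\<epsilon>' > 0"
  define \<epsilon> where "\<epsilon> = \<epsilon>' / 3"
  have \<epsilon>: "\<epsilon> > 0" using \<open>\<epsilon>' > 0\<close> by (simp add: \<epsilon>_def)
  define \<epsilon>0 where "\<epsilon>0 = \<epsilon> / (b - a + 1)"
  have \<epsilon>0: "\<epsilon>0 > 0" "\<epsilon>0 * (b - a) \<le> \<epsilon>" using \<epsilon> ab by (auto simp: \<epsilon>0_def field_simps)
  obtain \<delta>AC where \<delta>AC: "\<delta>AC > 0"
    "\<And>p q. p tagged_division_of {a..b} \<Longrightarrow> q \<subseteq> p \<Longrightarrow> (\<Sum>(t,K)\<in>q. measure lborel K) < \<delta>AC \<Longrightarrow>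
       (\<Sum>(t,K)\<in>q. norm (F (Sup K) - F (Inf K))) < \<epsilon>"
    using AC_curve_tagged_division_sum[OF AC \<epsilon>] by blast
  obtain \<gamma>1 where \<gamma>1: "gauge \<gamma>1" "\<And>p. p tagged_division_of {a..b} \<Longrightarrow> \<gamma>1 fine p \<Longrightarrow>
      norm ((\<Sum>(x, K)\<in>p. measure lborel K *\<^sub>R f x) - I) < \<epsilon>"
    using f \<epsilon> unfolding has_integral_real by meson
  have "(indicator N has_integral (0::real)) {a..b}"
    using N unfolding negligible_def by (metis box_real(2))
  then obtain \<gamma>2 where \<gamma>2: "gauge \<gamma>2" "\<And>p. p tagged_division_of {a..b} \<Longrightarrow> \<gamma>2 fine p \<Longrightarrow>
      norm ((\<Sum>(x, K)\<in>p. measure lborel K *\<^sub>R (indicator N x :: real)) - 0) < \<delta>AC"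
    using \<delta>AC(1) unfolding has_integral_real by meson
  have "\<forall>t. \<exists>d. t \<in> {a..b} \<and> t \<notin> N \<longrightarrow>
      d > 0 \<and> (\<forall>u. \<bar>u - t\<bar> < d \<longrightarrow> \<bar>F u - F t\<bar> \<le> (f t + \<epsilon>0) * \<bar>u - t\<bar>)"
    using loc \<epsilon>0(1) by blast
  then obtain del where del: "\<And>t. t \<in> {a..b} \<Longrightarrow> t \<notin> N \<Longrightarrow> del t > 0 \<and>
      (\<forall>u. \<bar>u - t\<bar> < del t \<longrightarrow> \<bar>F u - F t\<bar> \<le> (f t + \<epsilon>0) * \<bar>u - t\<bar>)"
    by metis
  define \<gamma>3 where "\<gamma>3 t = ball t (if t \<in> {a..b} \<and> t \<notin> N then del t else 1)" for t
  have \<gamma>3: "gauge \<gamma>3" unfolding gauge_def \<gamma>3_def using del by auto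
  obtain p where p: "p tagged_division_of {a..b}" "(\<lambda>x. \<gamma>1 x \<inter> (\<lambda>x. \<gamma>2 x \<inter> \<gamma>3 x) x) fine p"
    using fine_division_exists[OF gauge_Int[OF \<gamma>1(1) gauge_Int[OF \<gamma>2(1) \<gamma>3]], of a b] by (metis box_real(2))
  have fine: "\<gamma>1 fine p" "\<gamma>2 fine p" "\<gamma>3 fine p" using p(2) by (auto simp: fine_Int)
  note ivl = tagged_division_of_real_interval[OF p(1)]
  define pN where "pN = {q \<in> p. fst q \<in> N}"
  have fin: "finite p" "finite pN" using p(1) by (auto simp: pN_def)
  have "F b - F a = (\<Sum>(t,K)\<in>p. F (Sup K) - F (Inf K))"
    using additive_tagged_division_1[OF ab p(1), of F] by simp
  also have "\<dots> = (\<Sum>(t,K)\<in>p - pN. F (Sup K) - F (Inf K)) + (\<Sum>(t,K)\<in>pN. F (Sup K) - F (Inf K))"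
    using fin by (subst sum.subset_diff[of pN p]) (auto simp: pN_def)
  also have "(\<Sum>(t,K)\<in>p - pN. F (Sup K) - F (Inf K)) \<le> (\<Sum>(t,K)\<in>p. measure lborel K * f t) + \<epsilon>0 * (b - a)"
  proof (rule tagged_division_increment_sum_le[OF ab p(1) _ _ f_nonneg less_imp_le[OF \<epsilon>0(1)]])
    fix t K u assume tK: "(t, K) \<in> p - pN" and u: "u \<in> K"
    then have t: "t \<in> {a..b}" "t \<notin> N" using ivl(2-5)[of t K] by (auto simp: pN_def)
    have "K \<subseteq> ball t (del t)" using fine(3) tK t unfolding fine_def \<gamma>3_def by fastforce
    then have "\<bar>u - t\<bar> < del t" using u by (auto simp: dist_real_def abs_minus_commute)
    then show "\<bar>F u - F t\<bar> \<le> (f t + \<epsilon>0) * \<bar>u - t\<bar>" using del[OF t] by blast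
  qed auto
  also have "(\<Sum>(t,K)\<in>pN. F (Sup K) - F (Inf K)) \<le> (\<Sum>(t,K)\<in>pN. norm (F (Sup K) - F (Inf K)))"
    by (rule sum_mono) auto
  also have "\<dots> < \<epsilon>"
  proof (rule \<delta>AC(2)[OF p(1)])
    show "pN \<subseteq> p" by (auto simp: pN_def)
    have "(\<Sum>(t,K)\<in>pN. measure lborel K) = (\<Sum>(t,K)\<in>p. measure lborel K *\<^sub>R (indicator N t :: real))"
      by (rule sum.mono_neutral_cong_left[OF fin(1)]) (auto simp: pN_def indicator_def)
    then show "(\<Sum>(t,K)\<in>pN. measure lborel K) < \<delta>AC" using \<gamma>2(2)[OF p(1) fine(2)] by simp
  qed
  finally have "F b - F a < (\<Sum>(t,K)\<in>p. measure lborel K * f t) + \<epsilon>0 * (b - a) + \<epsilon>" by simp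
  moreover have "(\<Sum>(t,K)\<in>p. measure lborel K * f t) < I + \<epsilon>"
    using \<gamma>1(2)[OF p(1) fine(1)] by (simp add: abs_less_iff)
  ultimately show "F b - F a \<le> I + \<epsilon>'" using \<epsilon>0 by (simp add: \<epsilon>_def)
qed

lemma local_lipschitz_compose_increment_bound:
  fixes \<eta> :: "real \<Rightarrow> 'a::real_normed_vector" and \<phi> :: "'a \<Rightarrow> real"
  assumes der: "(\<eta> has_vector_derivative v) (at r)" and k: "k \<ge> 0"
    and lip: "\<And>\<epsilon>. \<epsilon> > 0 \<Longrightarrow>
        \<exists>\<rho>>0. \<forall>y\<in>ball (\<eta> r) \<rho>. \<forall>z\<in>ball (\<eta> r) \<rho>. \<bar>\<phi> y - \<phi> z\<bar> \<le> (k + \<epsilon>) * norm (y - z)"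
    and \<epsilon>: "\<epsilon> > 0"
  shows "\<exists>\<delta>>0. \<forall>u. \<bar>u - r\<bar> < \<delta> \<longrightarrow> \<bar>\<phi> (\<eta> u) - \<phi> (\<eta> r)\<bar> \<le> (k * norm v + \<epsilon>) * \<bar>u - r\<bar>"
proof -
  define n where "n = norm v"
  have n: "n \<ge> 0" by (simp add: n_def)
  define \<epsilon>1 where "\<epsilon>1 = min 1 (\<epsilon> / (k + n + 1))"
  have \<epsilon>1: "\<epsilon>1 > 0" "\<epsilon>1 \<le> 1" using \<epsilon> k n by (auto simp: \<epsilon>1_def)
  have "\<epsilon>1 * (k + n + 1) \<le> \<epsilon> / (k + n + 1) * (k + n + 1)"
    using k n by (intro mult_right_mono) (auto simp: \<epsilon>1_def)
  then have \<epsilon>1_small: "\<epsilon>1 * (k + n + 1) \<le> \<epsilon>" using k n by simp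
  have prod: "(k + \<epsilon>1) * (n + \<epsilon>1) \<le> k * n + \<epsilon>"
  proof -
    have "(k + \<epsilon>1) * (n + \<epsilon>1) = k * n + \<epsilon>1 * (k + n + \<epsilon>1)" by (simp add: algebra_simps)
    also have "\<dots> \<le> k * n + \<epsilon>1 * (k + n + 1)" using \<epsilon>1 by (intro add_left_mono mult_left_mono) auto
    finally show ?thesis using \<epsilon>1_small by linarith
  qed
  obtain \<rho> where \<rho>: "\<rho> > 0" "\<forall>y\<in>ball (\<eta> r) \<rho>. \<forall>z\<in>ball (\<eta> r) \<rho>. \<bar>\<phi> y - \<phi> z\<bar> \<le> (k + \<epsilon>1) * norm (y - z)"
    using lip[OF \<epsilon>1(1)] by blast
  have "(\<eta> has_derivative (\<lambda>h. h *\<^sub>R v)) (at r)" using der by (simp add: has_vector_derivative_def)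
  then obtain \<delta>1 where \<delta>1: "\<delta>1 > 0"
    "\<And>u. norm (u - r) < \<delta>1 \<Longrightarrow> norm (\<eta> u - \<eta> r - (u - r) *\<^sub>R v) \<le> \<epsilon>1 * norm (u - r)"
    using \<epsilon>1(1) unfolding has_derivative_at_alt by blast
  define \<delta> where "\<delta> = min \<delta>1 (\<rho> / (n + 2))"
  have "\<bar>\<phi> (\<eta> u) - \<phi> (\<eta> r)\<bar> \<le> (k * n + \<epsilon>) * \<bar>u - r\<bar>" if u: "\<bar>u - r\<bar> < \<delta>" for u
  proof -
    have "norm (\<eta> u - \<eta> r) \<le> norm ((u - r) *\<^sub>R v) + norm (\<eta> u - \<eta> r - (u - r) *\<^sub>R v)"
      by (rule norm_triangle_sub)
    also have "\<dots> \<le> n * \<bar>u - r\<bar> + \<epsilon>1 * \<bar>u - r\<bar>"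
      using \<delta>1(2)[of u] u by (auto simp: \<delta>_def n_def)
    finally have step: "norm (\<eta> u - \<eta> r) \<le> (n + \<epsilon>1) * \<bar>u - r\<bar>" by (simp add: algebra_simps)
    also have "\<dots> \<le> (n + 2) * \<bar>u - r\<bar>" using \<epsilon>1 by (intro mult_right_mono) auto
    also have "\<dots> < (n + 2) * (\<rho> / (n + 2))"
      using u n by (intro mult_strict_left_mono) (auto simp: \<delta>_def)
    finally have "\<eta> u \<in> ball (\<eta> r) \<rho>" using n by (simp add: dist_norm norm_minus_commute)
    then have "\<bar>\<phi> (\<eta> u) - \<phi> (\<eta> r)\<bar> \<le> (k + \<epsilon>1) * norm (\<eta> u - \<eta> r)"
      using \<rho> by auto
    also have "\<dots> \<le> (k + \<epsilon>1) * ((n + \<epsilon>1) * \<bar>u - r\<bar>)"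
      using step k \<epsilon>1 by (intro mult_left_mono) auto
    also have "\<dots> \<le> (k * n + \<epsilon>) * \<bar>u - r\<bar>"
      using prod by (simp add: mult.assoc[symmetric] mult_right_mono)
    finally show ?thesis .
  qed
  moreover have "\<delta> > 0" using \<delta>1 \<rho> n by (auto simp: \<delta>_def)
  ultimately show ?thesis unfolding n_def by blast
qed

lemma increment_le_integral_of_local_lipschitz:
  fixes \<eta> :: "real \<Rightarrow> 'a::real_normed_vector" and \<phi> :: "'a \<Rightarrow> real"
  assumes st: "s \<le> t" and AC: "AC_curve s t UNIV (\<phi> \<circ> \<eta>)" and N: "negligible N"
    and der: "\<And>r. r \<in> {s..t} \<Longrightarrow> r \<notin> N \<Longrightarrow> (\<eta> has_vector_derivative \<eta>' r) (at r)"
    and lip: "\<And>r \<epsilon>. r \<in> {s..t} \<Longrightarrow> r \<notin> N \<Longrightarrow> \<epsilon> > 0 \<Longrightarrow>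
        \<exists>\<rho>>0. \<forall>y\<in>ball (\<eta> r) \<rho>. \<forall>z\<in>ball (\<eta> r) \<rho>. \<bar>\<phi> y - \<phi> z\<bar> \<le> (\<kappa> r + \<epsilon>) * norm (y - z)"
    and \<kappa>: "\<And>r. r \<in> {s..t} \<Longrightarrow> \<kappa> r \<ge> 0"
    and I: "((\<lambda>r. \<kappa> r * norm (\<eta>' r)) has_integral I) {s..t}"
  shows "\<phi> (\<eta> t) - \<phi> (\<eta> s) \<le> I"
  using AC_increment_le_integral[OF st AC N _ _ I]
    local_lipschitz_compose_increment_bound[OF der \<kappa> lip] \<kappa>
  by simp

lemma AC_curve_norm_increment_le_integral:
  fixes \<eta> \<eta>' :: "real \<Rightarrow> 'a::real_inner"
  assumes AC: "AC_curve a b U \<eta>" and N: "negligible N"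
    and der: "\<And>r. r \<in> {a..b} \<Longrightarrow> r \<notin> N \<Longrightarrow> (\<eta> has_vector_derivative \<eta>' r) (at r)"
    and int: "(\<lambda>r. norm (\<eta>' r)) integrable_on {a..b}"
    and st: "a \<le> s" "s \<le> t" "t \<le> b"
  shows "norm (\<eta> t - \<eta> s) \<le> integral {s..t} (\<lambda>r. norm (\<eta>' r))"
proof -
  have int_st: "((\<lambda>r. norm (\<eta>' r)) has_integral integral {s..t} (\<lambda>r. norm (\<eta>' r))) {s..t}"
    by (rule integrable_integral, rule integrable_subinterval_real[OF int]) (use st in auto)
  show ?thesis
  proof (cases "\<eta> t = \<eta> s")
    case True
    then show ?thesis using has_integral_nonneg[OF int_st] by simp
  next
    case False
    define u where "u = (\<eta> t - \<eta> s) /\<^sub>R norm (\<eta> t - \<eta> s)"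
    have lip: "\<bar>u \<bullet> y - u \<bullet> z\<bar> \<le> 1 * norm (y - z)" for y z
      using Cauchy_Schwarz_ineq2[of u "y - z"] False by (simp add: u_def inner_diff_right)
    have "AC_curve s t UNIV ((\<lambda>y. u \<bullet> y) \<circ> \<eta>)"
      using AC_curve_compose_lipschitz[where L=1, OF AC zero_less_one] lip
        AC_curve_subinterval st by fastforce
    moreover have "\<exists>\<rho>>0. \<forall>y\<in>ball (\<eta> r) \<rho>. \<forall>z\<in>ball (\<eta> r) \<rho>. \<bar>u \<bullet> y - u \<bullet> z\<bar> \<le> (1 + \<epsilon>) * norm (y - z)"
      if "\<epsilon> > 0" for r \<epsilon>
    proof (intro exI[of _ 1] conjI ballI)
      fix y z :: 'a
      have "1 * norm (y - z) \<le> (1 + \<epsilon>) * norm (y - z)" using that by (intro mult_right_mono) auto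
      with lip[of y z] show "\<bar>u \<bullet> y - u \<bullet> z\<bar> \<le> (1 + \<epsilon>) * norm (y - z)" by linarith
    qed simp
    moreover have "((\<lambda>r. 1 * norm (\<eta>' r)) has_integral integral {s..t} (\<lambda>r. norm (\<eta>' r))) {s..t}"
      using int_st by simp
    ultimately have "u \<bullet> \<eta> t - u \<bullet> \<eta> s \<le> integral {s..t} (\<lambda>r. norm (\<eta>' r))"
      using der st
      by (intro increment_le_integral_of_local_lipschitz[where \<kappa>="\<lambda>_. 1" and \<phi>="\<lambda>y. u \<bullet> y", OF st(2) _ N])
        auto
    moreover have "u \<bullet> \<eta> t - u \<bullet> \<eta> s = norm (\<eta> t - \<eta> s)"
      using False
      by (simp add: u_def inner_diff_right[symmetric] power2_norm_eq_inner[symmetric] power2_eq_square divide_simps)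
    ultimately show ?thesis by simp
  qed
qed

section \<open>Gradients from chords of a curve\<close>

lemma mult_norm_scaleR_diff_le:
  fixes v y :: "'a::real_inner"
  assumes \<tau>: "\<tau> > 0" and k: "k \<ge> 0"
  shows "k * norm (\<tau> *\<^sub>R v - y) \<le> \<tau> * (norm v)\<^sup>2 / 2 - v \<bullet> y + (norm y)\<^sup>2 / (2 * \<tau>) + \<tau> * k\<^sup>2 / 2"
proof -
  define A where "A = norm (\<tau> *\<^sub>R v - y)"
  have A2: "A\<^sup>2 = \<tau>\<^sup>2 * (norm v)\<^sup>2 - 2 * \<tau> * (v \<bullet> y) + (norm y)\<^sup>2"
    unfolding A_def power2_norm_eq_inner
    by (simp add: inner_diff_left inner_diff_right inner_commute power2_eq_square algebra_simps)
  have "2 * (\<tau> * k) * A \<le> A\<^sup>2 + (\<tau> * k)\<^sup>2"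
    using sum_squares_bound[of A "\<tau> * k"] by (simp add: algebra_simps power2_eq_square)
  then have "k * A \<le> (\<tau>\<^sup>2 * (norm v)\<^sup>2 - 2 * \<tau> * (v \<bullet> y) + (norm y)\<^sup>2 + \<tau>\<^sup>2 * k\<^sup>2) / (2 * \<tau>)"
    using \<tau> by (simp add: A2 field_simps power_mult_distrib)
  also have "\<dots> = \<tau> * (norm v)\<^sup>2 / 2 - v \<bullet> y + (norm y)\<^sup>2 / (2 * \<tau>) + \<tau> * k\<^sup>2 / 2"
    using \<tau> by (simp add: field_simps power2_eq_square)
  finally show ?thesis by (simp add: A_def)
qed

text \<open>If \<open>w\<close> is \<open>(k + \<epsilon>)\<close>-Lipschitz and gains at least \<open>\<tau> k\<^sup>2 - \<epsilon> \<tau>\<close> along a step \<open>\<tau> v\<close> with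
  \<open>\<bar>v\<bar> \<le> k + \<epsilon>\<close>, then the step direction \<open>v\<close> is almost a subgradient of \<open>w\<close> at \<open>x\<close>.\<close>

lemma lipschitz_gain_lower_bound:
  fixes w :: "'a::real_inner \<Rightarrow> real"
  assumes \<tau>: "\<tau> > 0" and k: "k \<ge> 0" and \<epsilon>: "0 < \<epsilon>" "\<epsilon> \<le> 1"
    and lip: "\<bar>w (x + \<tau> *\<^sub>R v) - w (x + y)\<bar> \<le> (k + \<epsilon>) * norm (\<tau> *\<^sub>R v - y)"
    and gain: "w (x + \<tau> *\<^sub>R v) - w x \<ge> \<tau> * k\<^sup>2 - \<epsilon> * \<tau>"
    and v: "norm v \<le> k + \<epsilon>"
  shows "w (x + y) - w x \<ge> v \<bullet> y - (norm y)\<^sup>2 / (2 * \<tau>) - \<epsilon> * (2 * \<tau> * k + 5 / 2 * \<tau> + norm y)"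
proof -
  have amgm: "k * norm (\<tau> *\<^sub>R v - y) \<le> \<tau> * (norm v)\<^sup>2 / 2 - v \<bullet> y + (norm y)\<^sup>2 / (2 * \<tau>) + \<tau> * k\<^sup>2 / 2"
    by (rule mult_norm_scaleR_diff_le[OF \<tau> k])
  have "norm (\<tau> *\<^sub>R v - y) \<le> \<tau> * norm v + norm y"
    using norm_triangle_ineq4[of "\<tau> *\<^sub>R v" y] \<tau> by simp
  also have "\<dots> \<le> \<tau> * (k + 1) + norm y"
    using \<tau> v \<epsilon> by (intro add_right_mono mult_left_mono) auto
  finally have "\<epsilon> * norm (\<tau> *\<^sub>R v - y) \<le> \<epsilon> * (\<tau> * (k + 1) + norm y)"
    using \<epsilon> by (intro mult_left_mono) auto
  moreover have "\<tau> * (norm v)\<^sup>2 \<le> \<tau> * (k\<^sup>2 + \<epsilon> * (2 * k + 1))"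
  proof -
    have "(norm v)\<^sup>2 \<le> (k + \<epsilon>)\<^sup>2" using v by (intro power_mono) auto
    also have "\<dots> \<le> k\<^sup>2 + \<epsilon> * (2 * k + 1)"
      using \<epsilon> k by (simp add: power2_eq_square algebra_simps mult_left_mono)
    finally show ?thesis using \<tau> by (intro mult_left_mono) auto
  qed
  ultimately show ?thesis
    using lip gain amgm by (simp add: algebra_simps abs_le_iff)
qed

lemma inner_sandwich_estimate:
  fixes D :: "'a::real_inner \<Rightarrow> real"
  assumes s: "s > 0"
    and bounds: "\<And>y. norm y = s \<Longrightarrow> p \<bullet> y - s * e \<le> D y \<and> D y \<le> q \<bullet> y + s * e"
    and y: "norm y = s"
  shows "\<bar>D y - p \<bullet> y\<bar> \<le> 3 * (s * e)"
proof -
  have "norm (p - q) \<le> 2 * e"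
  proof (cases "p = q")
    case True
    then have "0 \<le> s * e" using bounds[OF y] by simp
    then show ?thesis using True s by (simp add: zero_le_mult_iff)
  next
    case False
    define u where "u = (s / norm (p - q)) *\<^sub>R (p - q)"
    have "norm u = s" using False s by (simp add: u_def)
    then have "(p - q) \<bullet> u \<le> 2 * s * e" using bounds[of u] by (simp add: inner_diff_left)
    moreover have "(p - q) \<bullet> u = s * norm (p - q)"
      using False by (simp add: u_def power2_norm_eq_inner[symmetric] power2_eq_square)
    ultimately show ?thesis using s by simp
  qed
  then have "norm (q - p) * norm y \<le> 2 * e * s"
    using y s by (simp add: norm_minus_commute mult_right_mono)
  then have "\<bar>q \<bullet> y - p \<bullet> y\<bar> \<le> 2 * (s * e)"
    using Cauchy_Schwarz_ineq2[of "q - p" y] by (simp add: inner_diff_left mult_ac)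
  then show ?thesis using bounds[OF y] unfolding abs_le_iff by linarith
qed

lemma lipschitz_chord_bounds:
  fixes w :: "'a::real_inner \<Rightarrow> real"
  assumes \<tau>: "\<tau> > 0" and k: "k \<ge> 0" and \<epsilon>: "0 < \<epsilon>" "\<epsilon> \<le> 1"
    and lip: "\<And>p q. p \<in> ball x r \<Longrightarrow> q \<in> ball x r \<Longrightarrow> \<bar>w p - w q\<bar> \<le> (k + \<epsilon>) * norm (p - q)"
    and fwd: "\<bar>w (x + \<tau> *\<^sub>R v) - w x - \<tau> * k\<^sup>2\<bar> \<le> \<epsilon> * \<tau>"
    and bwd: "\<bar>w (x - \<tau> *\<^sub>R v') - w x + \<tau> * k\<^sup>2\<bar> \<le> \<epsilon> * \<tau>"
    and v: "norm v \<le> k + \<epsilon>" and v': "norm v' \<le> k + \<epsilon>"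
    and r: "(k + 1) * \<tau> < r" and y: "norm y < r"
  shows "v \<bullet> y - ((norm y)\<^sup>2 / (2 * \<tau>) + \<epsilon> * (2 * \<tau> * k + 5 / 2 * \<tau> + norm y)) \<le> w (x + y) - w x \<and>
    w (x + y) - w x \<le> v' \<bullet> y + ((norm y)\<^sup>2 / (2 * \<tau>) + \<epsilon> * (2 * \<tau> * k + 5 / 2 * \<tau> + norm y))"
proof -
  have "norm (\<tau> *\<^sub>R u) < r" if "norm u \<le> k + \<epsilon>" for u
  proof -
    have "\<tau> * norm u \<le> \<tau> * (k + 1)" using that \<epsilon>(2) \<tau> by (intro mult_left_mono) auto
    moreover have "norm (\<tau> *\<^sub>R u) = \<tau> * norm u" "\<tau> * (k + 1) < r" using \<tau> r by (simp_all add: mult.commute)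
    ultimately show ?thesis by linarith
  qed
  then have in_ball: "x + \<tau> *\<^sub>R v \<in> ball x r" "x + \<tau> *\<^sub>R (- v') \<in> ball x r" "x + y \<in> ball x r"
    using v v' y by (auto simp: dist_norm)
  have lip_ends: "\<bar>w (x + \<tau> *\<^sub>R u) - w (x + y)\<bar> \<le> (k + \<epsilon>) * norm (\<tau> *\<^sub>R u - y)"
    if "x + \<tau> *\<^sub>R u \<in> ball x r" for u
    using lip[OF that in_ball(3)] by simp
  have "w (x + y) - w x \<ge> v \<bullet> y - (norm y)\<^sup>2 / (2 * \<tau>) - \<epsilon> * (2 * \<tau> * k + 5 / 2 * \<tau> + norm y)"
    using fwd by (intro lipschitz_gain_lower_bound[OF \<tau> k \<epsilon> lip_ends[OF in_ball(1)] _ v]) (simp add: abs_le_iff)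
  moreover have "- w (x + y) - - w x
      \<ge> - v' \<bullet> y - (norm y)\<^sup>2 / (2 * \<tau>) - \<epsilon> * (2 * \<tau> * k + 5 / 2 * \<tau> + norm y)"
    using lip_ends[OF in_ball(2)] bwd v'
    by (intro lipschitz_gain_lower_bound[OF \<tau> k \<epsilon>]) (simp_all add: abs_minus_commute abs_le_iff)
  ultimately show ?thesis by (simp add: inner_minus_left)
qed

lemma difference_quotient_gradient_estimate:
  fixes w :: "'a::real_inner \<Rightarrow> real" and \<eta> :: "real \<Rightarrow> 'a"
  assumes k: "k \<ge> 0"
    and lip: "\<And>\<epsilon>. \<epsilon> > 0 \<Longrightarrow> \<exists>r>0. \<forall>y\<in>ball x r. \<forall>z\<in>ball x r. \<bar>w y - w z\<bar> \<le> (k + \<epsilon>) * norm (y - z)"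
    and gain: "\<And>\<epsilon>. \<epsilon> > 0 \<Longrightarrow> \<exists>\<delta>>0. \<forall>\<tau>. 0 < \<tau> \<and> \<tau> < \<delta> \<longrightarrow>
               \<bar>w (\<eta> (t0 + \<tau>)) - w x - \<tau> * k\<^sup>2\<bar> \<le> \<epsilon> * \<tau> \<and> \<bar>w (\<eta> (t0 - \<tau>)) - w x + \<tau> * k\<^sup>2\<bar> \<le> \<epsilon> * \<tau>"
    and speed: "\<And>\<epsilon>. \<epsilon> > 0 \<Longrightarrow> \<exists>\<delta>>0. \<forall>\<tau>. 0 < \<tau> \<and> \<tau> < \<delta> \<longrightarrow>
               norm (\<eta> (t0 + \<tau>) - x) \<le> (k + \<epsilon>) * \<tau> \<and> norm (\<eta> (t0 - \<tau>) - x) \<le> (k + \<epsilon>) * \<tau>"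
    and M: "M > 0" and \<epsilon>: "\<epsilon> > 0"
  shows "\<exists>\<rho>>0. \<forall>y. norm y < \<rho> \<longrightarrow>
           \<bar>w (x + y) - w x - ((\<eta> (t0 + M * norm y) - x) /\<^sub>R (M * norm y)) \<bullet> y\<bar> \<le> (2 / M + 3 * \<epsilon>) * norm y"
proof -
  define C where "C = M * (4 * k + 5) / 2 + 1"
  have C: "C > 0" using M k by (simp add: C_def add_pos_nonneg)
  define \<epsilon>1 where "\<epsilon>1 = min 1 (\<epsilon> / C)"
  have \<epsilon>1: "\<epsilon>1 > 0" "\<epsilon>1 \<le> 1" "\<epsilon>1 * C \<le> \<epsilon>"
    using \<epsilon> C by (auto simp: \<epsilon>1_def min_def field_simps)
  obtain r where r: "r > 0" "\<forall>y\<in>ball x r. \<forall>z\<in>ball x r. \<bar>w y - w z\<bar> \<le> (k + \<epsilon>1) * norm (y - z)"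
    using lip[OF \<epsilon>1(1)] by blast
  obtain \<delta>2 where \<delta>2: "\<delta>2 > 0" "\<forall>\<tau>. 0 < \<tau> \<and> \<tau> < \<delta>2 \<longrightarrow>
       \<bar>w (\<eta> (t0 + \<tau>)) - w x - \<tau> * k\<^sup>2\<bar> \<le> \<epsilon>1 * \<tau> \<and> \<bar>w (\<eta> (t0 - \<tau>)) - w x + \<tau> * k\<^sup>2\<bar> \<le> \<epsilon>1 * \<tau>"
    using gain[OF \<epsilon>1(1)] by blast
  obtain \<delta>3 where \<delta>3: "\<delta>3 > 0" "\<forall>\<tau>. 0 < \<tau> \<and> \<tau> < \<delta>3 \<longrightarrow>
       norm (\<eta> (t0 + \<tau>) - x) \<le> (k + \<epsilon>1) * \<tau> \<and> norm (\<eta> (t0 - \<tau>) - x) \<le> (k + \<epsilon>1) * \<tau>"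
    using speed[OF \<epsilon>1(1)] by blast
  define \<rho> where "\<rho> = min r (min (\<delta>2 / M) (min (\<delta>3 / M) (r / ((k + 1) * M))))"
  have \<rho>: "\<rho> > 0" using r \<delta>2 \<delta>3 M k by (auto simp: \<rho>_def)
  define e where "e = 1 / (2 * M) + \<epsilon>1 * C"
  define vp where "vp s = (\<eta> (t0 + M * s) - x) /\<^sub>R (M * s)" for s
  define vm where "vm s = (x - \<eta> (t0 - M * s)) /\<^sub>R (M * s)" for s
  have bounds: "vp s \<bullet> y - s * e \<le> w (x + y) - w x \<and> w (x + y) - w x \<le> vm s \<bullet> y + s * e"
    if y: "norm y = s" and s: "0 < s" "s < \<rho>" for y s
  proof -
    define \<tau> where "\<tau> = M * s"
    have "s < r / ((k + 1) * M)" using s by (simp add: \<rho>_def)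
    then have "s * ((k + 1) * M) < r" using M k by (simp add: pos_less_divide_eq)
    then have \<tau>: "\<tau> > 0" "\<tau> < \<delta>2" "\<tau> < \<delta>3" "(k + 1) * \<tau> < r"
      using M k s by (auto simp: \<tau>_def \<rho>_def field_simps)
    have ends: "\<eta> (t0 + \<tau>) = x + \<tau> *\<^sub>R vp s" "\<eta> (t0 - \<tau>) = x - \<tau> *\<^sub>R vm s"
      unfolding vp_def vm_def \<tau>_def[symmetric] using \<tau>(1) by simp_all
    have "vp s \<bullet> y - ((norm y)\<^sup>2 / (2 * \<tau>) + \<epsilon>1 * (2 * \<tau> * k + 5 / 2 * \<tau> + norm y)) \<le> w (x + y) - w x \<and>
        w (x + y) - w x \<le> vm s \<bullet> y + ((norm y)\<^sup>2 / (2 * \<tau>) + \<epsilon>1 * (2 * \<tau> * k + 5 / 2 * \<tau> + norm y))"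
    proof (rule lipschitz_chord_bounds[OF \<tau>(1) k \<epsilon>1(1,2) _ _ _ _ _ \<tau>(4)])
      show "\<bar>w p - w q\<bar> \<le> (k + \<epsilon>1) * norm (p - q)" if "p \<in> ball x r" "q \<in> ball x r" for p q
        using r(2) that by blast
      show "\<bar>w (x + \<tau> *\<^sub>R vp s) - w x - \<tau> * k\<^sup>2\<bar> \<le> \<epsilon>1 * \<tau>" "\<bar>w (x - \<tau> *\<^sub>R vm s) - w x + \<tau> * k\<^sup>2\<bar> \<le> \<epsilon>1 * \<tau>"
        using \<delta>2(2) \<tau>(1,2) by (auto simp: ends[symmetric])
      show "norm (vp s) \<le> k + \<epsilon>1" "norm (vm s) \<le> k + \<epsilon>1"
        using \<delta>3(2) \<tau> by (auto simp: ends norm_minus_commute mult.commute)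
      show "norm y < r" using y s by (simp add: \<rho>_def)
    qed
    moreover have "(norm y)\<^sup>2 / (2 * \<tau>) + \<epsilon>1 * (2 * \<tau> * k + 5 / 2 * \<tau> + norm y) = s * e"
      using y M s by (simp add: \<tau>_def e_def C_def power2_eq_square field_simps)
    ultimately show ?thesis by simp
  qed
  have "3 / (2 * M) \<le> 2 / M" using M by (simp add: field_simps)
  then have err_bound: "3 * e \<le> 2 / M + 3 * \<epsilon>" using \<epsilon>1(3) by (simp add: e_def algebra_simps)
  have "\<bar>w (x + y) - w x - vp (norm y) \<bullet> y\<bar> \<le> (2 / M + 3 * \<epsilon>) * norm y" if y: "norm y < \<rho>" for y
  proof (cases "y = 0")
    case False
    then have "norm y > 0" by simp
    moreover have "vp (norm y) \<bullet> z - norm y * e \<le> w (x + z) - w x \<and>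
        w (x + z) - w x \<le> vm (norm y) \<bullet> z + norm y * e" if "norm z = norm y" for z
      using bounds[OF that] y \<open>norm y > 0\<close> by blast
    ultimately have "\<bar>w (x + y) - w x - vp (norm y) \<bullet> y\<bar> \<le> 3 * (norm y * e)"
      by (rule inner_sandwich_estimate[where D="\<lambda>y. w (x + y) - w x" and y=y]) simp_all
    also have "\<dots> = (3 * e) * norm y" by simp
    also have "\<dots> \<le> (2 / M + 3 * \<epsilon>) * norm y"
      using err_bound by (rule mult_right_mono) simp
    finally show ?thesis .
  qed simp
  then show ?thesis using \<rho> unfolding vp_def by blast
qed

definition chord_gradient_estimate :: "('a::real_inner \<Rightarrow> real) \<Rightarrow> (real \<Rightarrow> 'a) \<Rightarrow> real \<Rightarrow> bool" where
  "chord_gradient_estimate w \<eta> t0 \<longleftrightarrow> (\<forall>M>0. \<forall>\<epsilon>>0. \<exists>\<rho>>0. \<forall>y. norm y < \<rho> \<longrightarrow>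
     \<bar>w (\<eta> t0 + y) - w (\<eta> t0) - ((\<eta> (t0 + M * norm y) - \<eta> t0) /\<^sub>R (M * norm y)) \<bullet> y\<bar>
       \<le> (2 / M + 3 * \<epsilon>) * norm y)"

lemma chord_gradient_estimate_half:
  assumes P: "chord_gradient_estimate w \<eta> t0" and e: "e > 0"
  shows "\<exists>\<rho>>0. \<forall>y. norm y < \<rho> \<longrightarrow>
    \<bar>w (\<eta> t0 + y) - w (\<eta> t0) - ((\<eta> (t0 + 8 / e * norm y) - \<eta> t0) /\<^sub>R (8 / e * norm y)) \<bullet> y\<bar>
      \<le> (e / 2) * norm y"
proof -
  have "2 / (8 / e) + 3 * (e / 12) = e / 2" using e by (simp add: field_simps)
  moreover have "8 / e > 0" "e / 12 > 0" using e by auto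
  ultimately show ?thesis
    using P[unfolded chord_gradient_estimate_def, rule_format, of "8 / e" "e / 12"] by simp
qed

lemma has_vector_derivative_forward_quotient:
  assumes "(\<eta> has_vector_derivative v) (at t0)" and e: "e > 0"
  obtains d where "d > 0" "\<And>\<tau>. 0 < \<tau> \<Longrightarrow> \<tau> < d \<Longrightarrow> norm ((\<eta> (t0 + \<tau>) - \<eta> t0) /\<^sub>R \<tau> - v) \<le> e"
proof -
  have "(\<eta> has_derivative (\<lambda>h. h *\<^sub>R v)) (at t0)" using assms(1) by (simp add: has_vector_derivative_def)
  then obtain d where d: "d > 0" "\<And>u. norm (u - t0) < d \<Longrightarrow> norm (\<eta> u - \<eta> t0 - (u - t0) *\<^sub>R v) \<le> e * norm (u - t0)"
    using e unfolding has_derivative_at_alt by blast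
  have "norm ((\<eta> (t0 + \<tau>) - \<eta> t0) /\<^sub>R \<tau> - v) \<le> e" if "0 < \<tau>" "\<tau> < d" for \<tau>
  proof -
    have "\<eta> (t0 + \<tau>) - \<eta> t0 - \<tau> *\<^sub>R v = \<tau> *\<^sub>R ((\<eta> (t0 + \<tau>) - \<eta> t0) /\<^sub>R \<tau> - v)"
      using that by (simp add: algebra_simps)
    then have "\<tau> * norm ((\<eta> (t0 + \<tau>) - \<eta> t0) /\<^sub>R \<tau> - v) \<le> e * \<tau>"
      using d(2)[of "t0 + \<tau>"] that by simp
    then show ?thesis using that by (simp add: mult.commute)
  qed
  with d(1) show thesis using that by blast
qed

lemma chord_gradient_estimate_has_derivative:
  fixes w :: "'a::real_inner \<Rightarrow> real" and \<eta> :: "real \<Rightarrow> 'a"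
  assumes P: "chord_gradient_estimate w \<eta> t0" and \<eta>: "(\<eta> has_vector_derivative v) (at t0)"
  shows "(w has_derivative (\<lambda>h. v \<bullet> h)) (at (\<eta> t0))"
  unfolding has_derivative_at_alt
proof (intro conjI allI impI)
  show "bounded_linear (\<lambda>h. v \<bullet> h)" by (rule bounded_linear_inner_right)
  fix e :: real assume e: "e > 0"
  define M where "M = 8 / e"
  have M: "M > 0" using e by (simp add: M_def)
  obtain \<rho> where \<rho>: "\<rho> > 0" "\<And>y. norm y < \<rho> \<Longrightarrow>
      \<bar>w (\<eta> t0 + y) - w (\<eta> t0) - ((\<eta> (t0 + M * norm y) - \<eta> t0) /\<^sub>R (M * norm y)) \<bullet> y\<bar> \<le> (e / 2) * norm y"
    using chord_gradient_estimate_half[OF P e] unfolding M_def by blast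
  obtain d where d: "d > 0" "\<And>\<tau>. 0 < \<tau> \<Longrightarrow> \<tau> < d \<Longrightarrow> norm ((\<eta> (t0 + \<tau>) - \<eta> t0) /\<^sub>R \<tau> - v) \<le> e / 2"
    using has_vector_derivative_forward_quotient[OF \<eta>, of "e / 2"] e by auto
  have "\<bar>w (\<eta> t0 + h) - w (\<eta> t0) - v \<bullet> h\<bar> \<le> e * norm h" if h: "norm h < min \<rho> (d / M)" for h
  proof (cases "h = 0")
    case False
    let ?q = "(\<eta> (t0 + M * norm h) - \<eta> t0) /\<^sub>R (M * norm h)"
    have "M * norm h < d" using h M by (simp add: field_simps)
    moreover have "M * norm h > 0" using False M by simp
    ultimately have "norm (?q - v) \<le> e / 2" by (rule d(2)[rotated])
    have "\<bar>(?q - v) \<bullet> h\<bar> \<le> norm (?q - v) * norm h" by (rule Cauchy_Schwarz_ineq2)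
    also have "\<dots> \<le> e / 2 * norm h" using \<open>norm (?q - v) \<le> e / 2\<close> by (rule mult_right_mono) simp
    finally have "\<bar>?q \<bullet> h - v \<bullet> h\<bar> \<le> e / 2 * norm h" by (simp only: inner_diff_left)
    moreover have "\<bar>w (\<eta> t0 + h) - w (\<eta> t0) - ?q \<bullet> h\<bar> \<le> e / 2 * norm h" using \<rho>(2) h by simp
    ultimately show ?thesis by linarith
  qed simp
  then show "\<exists>d>0. \<forall>y. norm (y - \<eta> t0) < d \<longrightarrow> norm (w y - w (\<eta> t0) - v \<bullet> (y - \<eta> t0)) \<le> e * norm (y - \<eta> t0)"
    using \<rho>(1) d(1) M by (intro exI[of _ "min \<rho> (d / M)"]) (auto, metis add.commute diff_add_cancel)
qed

lemma chord_gradient_estimate_diff_has_derivative_0: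
  fixes w1 w2 :: "'a::real_inner \<Rightarrow> real" and \<eta> :: "real \<Rightarrow> 'a"
  assumes P1: "chord_gradient_estimate w1 \<eta> t0" and P2: "chord_gradient_estimate w2 \<eta> t0"
  shows "((\<lambda>y. w1 y - w2 y) has_derivative (\<lambda>h. 0)) (at (\<eta> t0))"
  unfolding has_derivative_at_alt
proof (intro conjI allI impI)
  show "bounded_linear (\<lambda>h::'a. 0::real)" by (rule bounded_linear_zero)
  fix e :: real assume e: "e > 0"
  define M where "M = 8 / e"
  obtain \<rho>1 where \<rho>1: "\<rho>1 > 0" "\<And>y. norm y < \<rho>1 \<Longrightarrow>
      \<bar>w1 (\<eta> t0 + y) - w1 (\<eta> t0) - ((\<eta> (t0 + M * norm y) - \<eta> t0) /\<^sub>R (M * norm y)) \<bullet> y\<bar> \<le> (e / 2) * norm y"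
    using chord_gradient_estimate_half[OF P1 e] unfolding M_def by blast
  obtain \<rho>2 where \<rho>2: "\<rho>2 > 0" "\<And>y. norm y < \<rho>2 \<Longrightarrow>
      \<bar>w2 (\<eta> t0 + y) - w2 (\<eta> t0) - ((\<eta> (t0 + M * norm y) - \<eta> t0) /\<^sub>R (M * norm y)) \<bullet> y\<bar> \<le> (e / 2) * norm y"
    using chord_gradient_estimate_half[OF P2 e] unfolding M_def by blast
  show "\<exists>d>0. \<forall>y. norm (y - \<eta> t0) < d \<longrightarrow> norm (w1 y - w2 y - (w1 (\<eta> t0) - w2 (\<eta> t0)) - 0) \<le> e * norm (y - \<eta> t0)"
  proof (intro exI[of _ "min \<rho>1 \<rho>2"] conjI allI impI)
    fix y assume y: "norm (y - \<eta> t0) < min \<rho>1 \<rho>2"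
    define h where "h = y - \<eta> t0"
    have yh: "y = \<eta> t0 + h" by (simp add: h_def)
    have A: "\<bar>w1 (\<eta> t0 + h) - w1 (\<eta> t0) - ((\<eta> (t0 + M * norm h) - \<eta> t0) /\<^sub>R (M * norm h)) \<bullet> h\<bar> \<le> (e / 2) * norm h"
      using \<rho>1(2)[of h] y by (simp add: h_def)
    have B: "\<bar>w2 (\<eta> t0 + h) - w2 (\<eta> t0) - ((\<eta> (t0 + M * norm h) - \<eta> t0) /\<^sub>R (M * norm h)) \<bullet> h\<bar> \<le> (e / 2) * norm h"
      using \<rho>2(2)[of h] y by (simp add: h_def)
    have "\<bar>w1 (\<eta> t0 + h) - w2 (\<eta> t0 + h) - (w1 (\<eta> t0) - w2 (\<eta> t0))\<bar> \<le> e * norm h"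
      using A B by linarith
    then show "norm (w1 y - w2 y - (w1 (\<eta> t0) - w2 (\<eta> t0)) - 0) \<le> e * norm (y - \<eta> t0)"
      by (simp add: yh)
  qed (use \<rho>1 \<rho>2 in auto)
qed

section \<open>Calibrated curves\<close>

definition speed :: "('a \<Rightarrow> real) \<Rightarrow> real \<Rightarrow> 'a \<Rightarrow> real" where
  "speed V c x = sqrt (2 * max 0 (c - V x))"

lemma speed_nonneg: "speed V c x \<ge> 0"
  by (simp add: speed_def)

lemma continuous_on_speed: "continuous_on S V \<Longrightarrow> continuous_on S (speed V c)"
  unfolding speed_def by (intro continuous_intros) auto

lemma speed_squared: "V x \<le> c \<Longrightarrow> (speed V c x)\<^sup>2 = 2 * (c - V x)"
  by (simp add: speed_def)

lemma subsolution_potential_le: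
  fixes V :: "'a::euclidean_space \<Rightarrow> real" and g :: "'a \<Rightarrow> 'b::real_normed_vector"
  assumes U: "open U" and V: "continuous_on UNIV V"
    and sub: "AE x in lebesgue. x \<in> U \<longrightarrow> (1/2) * (norm (g x))\<^sup>2 + V x \<le> c"
    and x: "x \<in> U"
  shows "V x \<le> c"
proof (rule ccontr)
  assume "\<not> V x \<le> c"
  obtain N where N: "negligible N" "\<And>v. v \<notin> N \<Longrightarrow> v \<in> U \<Longrightarrow> (1/2) * (norm (g v))\<^sup>2 + V v \<le> c"
    using sub by (rule AE_lebesgue_negligibleE) blast
  have "open (U \<inter> {v. V v > c})"
    using U V by (intro open_Int) (auto intro: open_Collect_less continuous_on_const)
  moreover have "x \<in> U \<inter> {v. V v > c}" using x \<open>\<not> V x \<le> c\<close> by auto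
  moreover have "U \<inter> {v. V v > c} \<subseteq> N"
  proof
    fix v assume v: "v \<in> U \<inter> {v. V v > c}"
    have "(1/2) * (norm (g v))\<^sup>2 \<ge> 0" by simp
    with v N(2)[of v] show "v \<in> N" by force
  qed
  ultimately show False using open_not_negligible negligible_subset[OF N(1)] by blast
qed

lemma subsolution_gradient_le_speed:
  assumes "AE x in lebesgue. x \<in> U \<longrightarrow> (1/2) * (norm (g x))\<^sup>2 + V x \<le> c"
  shows "AE x in lebesgue. x \<in> U \<longrightarrow> norm (g x) \<le> speed V c x"
  using assms
proof eventually_elim
  case (elim x)
  show ?case
  proof
    assume "x \<in> U"
    then have sq: "(norm (g x))\<^sup>2 \<le> 2 * (c - V x)" using elim by simp
    have "0 \<le> 2 * (c - V x)" using order_trans[OF zero_le_power2 sq] .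
    then have "max 0 (c - V x) = c - V x" by simp
    with sq have "(norm (g x))\<^sup>2 \<le> 2 * max 0 (c - V x)" by simp
    then show "norm (g x) \<le> speed V c x" by (simp add: speed_def real_le_rsqrt)
  qed
qed

lemma has_integral_0_nonneg_AE_eq_0:
  fixes f :: "'a::euclidean_space \<Rightarrow> real"
  assumes int: "(f has_integral 0) S" and nonneg: "\<And>x. x \<in> S \<Longrightarrow> f x \<ge> 0"
  shows "AE x in lebesgue. x \<in> S \<longrightarrow> f x = 0"
proof -
  note intl = has_integral_integrable[OF int]
  have af: "f absolutely_integrable_on S"
    using nonneg by (intro absolutely_integrable_onI intl integrable_eq[OF intl]) simp
  then have "integral S f = set_lebesgue_integral lebesgue S f"
    by (intro set_lebesgue_integral_eq_integral(2)[symmetric])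
  then have "set_lebesgue_integral lebesgue S f = 0" using int by (simp add: integral_unique)
  then have "(AE x in lebesgue. indicator S x *\<^sub>R f x = 0)"
    unfolding set_lebesgue_integral_def
    by (subst (asm) integral_nonneg_eq_0_iff_AE) (use af nonneg in \<open>auto simp: set_integrable_def indicator_def\<close>)
  then show ?thesis by eventually_elim (auto simp: indicator_def)
qed

lemma integral_minus_const_le:
  fixes h :: "real \<Rightarrow> real"
  assumes pq: "p \<le> q" and h: "h integrable_on {p..q}" and close: "\<And>r. r \<in> {p..q} \<Longrightarrow> \<bar>h r - h0\<bar> \<le> \<epsilon>"
  shows "\<bar>integral {p..q} h - (q - p) * h0\<bar> \<le> \<epsilon> * (q - p)"
proof -
  have "((\<lambda>r. h r - h0) has_integral (integral {p..q} h - (q - p) * h0)) {p..q}"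
    using has_integral_diff[OF integrable_integral[OF h] has_integral_const_real[of h0 p q]] pq
    by (simp add: mult.commute)
  moreover have "((\<lambda>r. \<epsilon>) has_integral \<epsilon> * (q - p)) {p..q}"
    using has_integral_const_real[of \<epsilon> p q] pq by (simp add: mult.commute)
  ultimately show ?thesis using close by (rule has_integral_abs_le)
qed

lemma continuous_on_interval_near:
  fixes h :: "real \<Rightarrow> real"
  assumes h: "continuous_on {a..b} h" and t0: "t0 \<in> {a<..<b}" and e: "e > 0"
  obtains \<delta> where "\<delta> > 0" "\<delta> \<le> b - t0" "\<delta> \<le> t0 - a" "\<And>r. \<bar>r - t0\<bar> \<le> \<delta> \<Longrightarrow> \<bar>h r - h t0\<bar> \<le> e"
proof -
  obtain d where d: "d > 0" "\<And>r. r \<in> {a..b} \<Longrightarrow> dist r t0 < d \<Longrightarrow> dist (h r) (h t0) < e"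
    using h t0 e unfolding continuous_on_iff by (metis greaterThanLessThan_iff atLeastAtMost_iff less_imp_le)
  define \<delta> where "\<delta> = min (d / 2) (min (b - t0) (t0 - a))"
  have "\<bar>h r - h t0\<bar> \<le> e" if r: "\<bar>r - t0\<bar> \<le> \<delta>" for r
  proof -
    have "r \<in> {a..b}" "dist r t0 < d" using r d t0 by (auto simp: \<delta>_def abs_le_iff dist_real_def)
    then show ?thesis using d(2)[of r] by (auto simp: dist_real_def)
  qed
  moreover have "\<delta> > 0" "\<delta> \<le> b - t0" "\<delta> \<le> t0 - a" using d t0 by (auto simp: \<delta>_def)
  ultimately show thesis using that by blast
qed

lemma integral_near_point_estimate:
  fixes h :: "real \<Rightarrow> real"
  assumes h: "continuous_on {a..b} h" and t0: "t0 \<in> {a<..<b}" and e: "e > 0"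
  obtains \<delta> where "\<delta> > 0" "\<delta> \<le> b - t0" "\<delta> \<le> t0 - a"
    "\<And>\<tau>. 0 < \<tau> \<Longrightarrow> \<tau> < \<delta> \<Longrightarrow> \<bar>integral {t0..t0 + \<tau>} h - \<tau> * h t0\<bar> \<le> e * \<tau>"
    "\<And>\<tau>. 0 < \<tau> \<Longrightarrow> \<tau> < \<delta> \<Longrightarrow> \<bar>integral {t0 - \<tau>..t0} h - \<tau> * h t0\<bar> \<le> e * \<tau>"
proof -
  obtain \<delta> where \<delta>: "\<delta> > 0" "\<delta> \<le> b - t0" "\<delta> \<le> t0 - a" "\<And>r. \<bar>r - t0\<bar> \<le> \<delta> \<Longrightarrow> \<bar>h r - h t0\<bar> \<le> e"
    using continuous_on_interval_near[OF h t0 e] by blast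
  have int: "h integrable_on {p..q}" if "a \<le> p" "q \<le> b" for p q
    using that by (intro integrable_continuous_interval continuous_on_subset[OF h]) auto
  have "\<bar>integral {t0..t0 + \<tau>} h - \<tau> * h t0\<bar> \<le> e * \<tau>" "\<bar>integral {t0 - \<tau>..t0} h - \<tau> * h t0\<bar> \<le> e * \<tau>"
    if "0 < \<tau>" "\<tau> < \<delta>" for \<tau>
    using integral_minus_const_le[of t0 "t0 + \<tau>" h "h t0" e] integral_minus_const_le[of "t0 - \<tau>" t0 h "h t0" e]
      \<delta> that t0 int[of t0 "t0 + \<tau>"] int[of "t0 - \<tau>" t0]
    by (auto simp: abs_le_iff)
  with \<delta>(1-3) show thesis using that by blast
qed

locale calibrated_curve =
  fixes U :: "(real^'n) set" and V :: "real^'n \<Rightarrow> real" and c :: real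
    and w :: "real^'n \<Rightarrow> real" and g :: "real^'n \<Rightarrow> real^'n"
    and a b :: real and \<eta> \<eta>' :: "real \<Rightarrow> real^'n"
  assumes open_U: "open U" and continuous_V: "continuous_on UNIV V"
    and W1inf: "W1inf_grad U w g"
    and subsolution: "AE x in lebesgue. x \<in> U \<longrightarrow> (1/2) * (norm (g x))\<^sup>2 + V x \<le> c"
    and AC: "AC_curve a b U \<eta>"
    and derivative: "AE t in lebesgue. t \<in> {a..b} \<longrightarrow> (\<eta> has_vector_derivative \<eta>' t) (at t)"
    and calibrated: "((\<lambda>t. (1/2) * (norm (\<eta>' t))\<^sup>2 - V (\<eta> t) + c) has_integral (w (\<eta> b) - w (\<eta> a))) {a..b}"
    and a_le_b: "a \<le> b"
begin

lemma curve_in_U: "t \<in> {a..b} \<Longrightarrow> \<eta> t \<in> U"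
  using AC by (auto simp: AC_curve_def)

lemma continuous_on_speed_curve: "continuous_on {a..b} (\<lambda>r. speed V c (\<eta> r))"
  by (rule continuous_on_compose2[OF continuous_on_speed[OF continuous_V] AC_curve_imp_continuous_on[OF AC]]) auto

lemma speed_squared_curve: "t \<in> {a..b} \<Longrightarrow> (speed V c (\<eta> t))\<^sup>2 = 2 * (c - V (\<eta> t))"
  by (intro speed_squared subsolution_potential_le[OF open_U continuous_V subsolution] curve_in_U)

lemma speed_curve_integrable: "a \<le> s \<Longrightarrow> t \<le> b \<Longrightarrow> (\<lambda>r. speed V c (\<eta> r) ^ n) integrable_on {s..t}"
  by (intro integrable_continuous_interval continuous_intros continuous_on_subset[OF continuous_on_speed_curve]) auto

lemma derivative_negligibleE:
  obtains N where "negligible N" "\<And>t. t \<in> {a..b} \<Longrightarrow> t \<notin> N \<Longrightarrow> (\<eta> has_vector_derivative \<eta>' t) (at t)"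
  using derivative by (rule AE_lebesgue_negligibleE) blast

lemma norm_derivative_squared_integrable: "(\<lambda>r. (norm (\<eta>' r))\<^sup>2) integrable_on {a..b}"
proof -
  have L: "(\<lambda>r. (1/2) * (norm (\<eta>' r))\<^sup>2 - V (\<eta> r) + c) integrable_on {a..b}"
    using calibrated by blast
  have "continuous_on {a..b} (\<lambda>r. V (\<eta> r))"
    by (rule continuous_on_compose2[OF continuous_V AC_curve_imp_continuous_on[OF AC]]) auto
  then have "(\<lambda>r. V (\<eta> r)) integrable_on {a..b}" by (rule integrable_continuous_interval)
  then have "(\<lambda>r. 2 * (((1/2) * (norm (\<eta>' r))\<^sup>2 - V (\<eta> r) + c) + V (\<eta> r) - c)) integrable_on {a..b}"
    by (intro integrable_on_mult_right integrable_diff integrable_add L integrable_const_ivl)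
  then show ?thesis by simp
qed

lemma dominated_by_norm_derivative_squared_integrable:
  assumes "f \<in> borel_measurable (lebesgue_on {a..b})"
    and "\<And>r. r \<in> {a..b} \<Longrightarrow> \<bar>f r\<bar> \<le> (h r + (norm (\<eta>' r))\<^sup>2) / 2"
    and "h integrable_on {a..b}"
  shows "f integrable_on {a..b}"
proof -
  have "f absolutely_integrable_on {a..b}"
    using assms norm_derivative_squared_integrable
    by (intro measurable_bounded_by_integrable_imp_absolutely_integrable[where g="\<lambda>r. (h r + (norm (\<eta>' r))\<^sup>2) / 2"])
      (auto intro!: integrable_on_divide integrable_add)
  then show ?thesis using set_lebesgue_integral_eq_integral(1) by blast
qed

lemma norm_derivative_measurable: "(\<lambda>r. norm (\<eta>' r)) \<in> borel_measurable (lebesgue_on {a..b})"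
proof -
  have "(\<lambda>r. sqrt ((norm (\<eta>' r))\<^sup>2)) \<in> borel_measurable (lebesgue_on {a..b})"
    using integrable_imp_measurable[OF norm_derivative_squared_integrable] by measurable
  then show ?thesis by simp
qed

lemma norm_derivative_integrable: "(\<lambda>r. norm (\<eta>' r)) integrable_on {a..b}"
proof (rule dominated_by_norm_derivative_squared_integrable[OF norm_derivative_measurable])
  show "\<bar>norm (\<eta>' r)\<bar> \<le> (1 + (norm (\<eta>' r))\<^sup>2) / 2" for r
    using sum_squares_bound[of 1 "norm (\<eta>' r)"] by simp
qed (rule integrable_const_ivl)

lemma speed_mult_norm_derivative_integrable:
  "(\<lambda>r. speed V c (\<eta> r) * norm (\<eta>' r)) integrable_on {a..b}"
proof (rule dominated_by_norm_derivative_squared_integrable[where h="\<lambda>r. (speed V c (\<eta> r))\<^sup>2"])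
  show "(\<lambda>r. speed V c (\<eta> r) * norm (\<eta>' r)) \<in> borel_measurable (lebesgue_on {a..b})"
  proof -
    have "(\<lambda>r. speed V c (\<eta> r)) \<in> borel_measurable (lebesgue_on {a..b})"
      by (rule continuous_imp_measurable_on_sets_lebesgue[OF continuous_on_speed_curve]) auto
    then show ?thesis using norm_derivative_measurable by measurable
  qed
  show "\<bar>speed V c (\<eta> r) * norm (\<eta>' r)\<bar> \<le> ((speed V c (\<eta> r))\<^sup>2 + (norm (\<eta>' r))\<^sup>2) / 2" for r
    using sum_squares_bound[of "speed V c (\<eta> r)" "norm (\<eta>' r)"] speed_nonneg[of V c "\<eta> r"]
    by (simp add: abs_mult)
qed (use speed_curve_integrable[of a b 2] in simp)


lemma increment_le_speed_integral:
  assumes st: "a \<le> s" "s \<le> t" "t \<le> b"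
  shows "w (\<eta> t) - w (\<eta> s) \<le> integral {s..t} (\<lambda>r. speed V c (\<eta> r) * norm (\<eta>' r))"
proof -
  have bd: "AE v in lebesgue. v \<in> U \<longrightarrow> norm (g v) \<le> speed V c v"
    by (rule subsolution_gradient_le_speed[OF subsolution])
  note k = continuous_on_speed[OF continuous_V] and k_nonneg = speed_nonneg[of V c]
  obtain N where N: "negligible N" "\<And>t. t \<in> {a..b} \<Longrightarrow> t \<notin> N \<Longrightarrow> (\<eta> has_vector_derivative \<eta>' t) (at t)"
    using derivative_negligibleE by blast
  obtain r L where "r > 0" "L \<ge> 0"
    "\<And>x y z. x \<in> \<eta> ` {a..b} \<Longrightarrow> y \<in> ball x r \<Longrightarrow> z \<in> ball x r \<Longrightarrow> \<bar>w y - w z\<bar> \<le> L * norm (y - z)"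
    using weak_gradient_lipschitz_near_compact[OF W1inf open_U k bd k_nonneg
        compact_continuous_image[OF AC_curve_imp_continuous_on[OF AC] compact_Icc]] curve_in_U by blast
  then have "AC_curve s t UNIV (w \<circ> \<eta>)"
    using AC_curve_subinterval[OF AC_curve_compose_lipschitz[OF AC] st(1,3)] by blast
  then show ?thesis
  proof (rule increment_le_integral_of_local_lipschitz[OF st(2) _ N(1)])
    show "\<exists>\<rho>>0. \<forall>y\<in>ball (\<eta> r) \<rho>. \<forall>z\<in>ball (\<eta> r) \<rho>. \<bar>w y - w z\<bar> \<le> (speed V c (\<eta> r) + \<epsilon>) * norm (y - z)"
      if "r \<in> {s..t}" "\<epsilon> > 0" for r \<epsilon>
      using weak_gradient_local_lipschitz[OF W1inf open_U k bd k_nonneg curve_in_U] that st by auto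
    show "((\<lambda>r. speed V c (\<eta> r) * norm (\<eta>' r)) has_integral
        integral {s..t} (\<lambda>r. speed V c (\<eta> r) * norm (\<eta>' r))) {s..t}"
      using integrable_subinterval_real[OF speed_mult_norm_derivative_integrable] st by auto
  qed (use N(2) st speed_nonneg in auto)
qed

lemma speed_mult_norm_le_lagrangian:
  "t \<in> {a..b} \<Longrightarrow> speed V c (\<eta> t) * norm (\<eta>' t) \<le> (1/2) * (norm (\<eta>' t))\<^sup>2 - V (\<eta> t) + c"
  using sum_squares_bound[of "speed V c (\<eta> t)" "norm (\<eta>' t)"] speed_squared_curve[of t] by simp

text \<open>Calibration forces equality in the pointwise inequality \<open>k \<bar>\<eta>'\<bar> \<le> \<bar>\<eta>'\<bar>\<^sup>2/2 + k\<^sup>2/2\<close>.\<close>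

lemma norm_derivative_eq_speed_AE: "AE t in lebesgue. t \<in> {a..b} \<longrightarrow> norm (\<eta>' t) = speed V c (\<eta> t)"
proof -
  let ?L = "\<lambda>t. (1/2) * (norm (\<eta>' t))\<^sup>2 - V (\<eta> t) + c"
  let ?f = "\<lambda>t. speed V c (\<eta> t) * norm (\<eta>' t)"
  have "w (\<eta> b) - w (\<eta> a) \<le> integral {a..b} ?f"
    using increment_le_speed_integral[of a b] a_le_b by simp
  moreover have "integral {a..b} ?f \<le> integral {a..b} ?L"
    using speed_mult_norm_derivative_integrable calibrated speed_mult_norm_le_lagrangian
    by (intro integral_le) auto
  moreover have "integral {a..b} ?L = w (\<eta> b) - w (\<eta> a)" using calibrated by (rule integral_unique)
  ultimately have "integral {a..b} ?f = w (\<eta> b) - w (\<eta> a)" by linarith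
  then have "((\<lambda>t. ?L t - ?f t) has_integral 0) {a..b}"
    using has_integral_diff[OF calibrated integrable_integral[OF speed_mult_norm_derivative_integrable]] by simp
  then have "AE t in lebesgue. t \<in> {a..b} \<longrightarrow> ?L t - ?f t = 0"
    by (rule has_integral_0_nonneg_AE_eq_0) (use speed_mult_norm_le_lagrangian in auto)
  then show ?thesis
  proof eventually_elim
    case (elim t)
    show ?case
    proof
      assume t: "t \<in> {a..b}"
      have "(speed V c (\<eta> t) - norm (\<eta>' t))\<^sup>2 = 2 * (?L t - ?f t)"
        using speed_squared_curve[OF t] by (simp add: power2_eq_square algebra_simps)
      also have "\<dots> = 0" using elim t by simp
      finally show "norm (\<eta>' t) = speed V c (\<eta> t)" by simp
    qed
  qed
qed

lemma energy_conservation: "AE t in lebesgue. t \<in> {a..b} \<longrightarrow> (1/2) * (norm (\<eta>' t))\<^sup>2 + V (\<eta> t) = c"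
  using norm_derivative_eq_speed_AE by eventually_elim (auto simp: speed_squared_curve algebra_simps)

lemma speed_negligibleE:
  obtains N where "negligible N" "\<And>t. t \<in> {a..b} \<Longrightarrow> t \<notin> N \<Longrightarrow> norm (\<eta>' t) = speed V c (\<eta> t)"
  using norm_derivative_eq_speed_AE by (rule AE_lebesgue_negligibleE) blast

text \<open>The calibration inequality is an equality on the whole interval, hence on every subinterval.\<close>

lemma increment_eq_integral_speed_squared:
  assumes st: "a \<le> s" "s \<le> t" "t \<le> b"
  shows "w (\<eta> t) - w (\<eta> s) = integral {s..t} (\<lambda>r. (speed V c (\<eta> r))\<^sup>2)"
proof -
  obtain N where N: "negligible N" "\<And>t. t \<in> {a..b} \<Longrightarrow> t \<notin> N \<Longrightarrow> norm (\<eta>' t) = speed V c (\<eta> t)"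
    using speed_negligibleE by blast
  define J where "J p q = integral {p..q} (\<lambda>r. (speed V c (\<eta> r))\<^sup>2)" for p q
  have le: "w (\<eta> q) - w (\<eta> p) \<le> J p q" if "a \<le> p" "p \<le> q" "q \<le> b" for p q
  proof -
    have "integral {p..q} (\<lambda>r. speed V c (\<eta> r) * norm (\<eta>' r)) = J p q"
      unfolding J_def by (rule integral_spike[OF N(1)]) (use N(2) that in \<open>auto simp: power2_eq_square\<close>)
    then show ?thesis using increment_le_speed_integral[OF that] by simp
  qed
  have total: "w (\<eta> b) - w (\<eta> a) = J a b"
  proof -
    have "integral {a..b} (\<lambda>t. (1/2) * (norm (\<eta>' t))\<^sup>2 - V (\<eta> t) + c) = J a b"
      unfolding J_def by (rule integral_spike[OF N(1)]) (use N(2) speed_squared_curve in \<open>auto simp: field_simps\<close>)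
    then show ?thesis using integral_unique[OF calibrated] by simp
  qed
  have combine: "J p q + J q r = J p r" if "a \<le> p" "p \<le> q" "q \<le> r" "r \<le> b" for p q r
    unfolding J_def using that
    by (intro Henstock_Kurzweil_Integration.integral_combine speed_curve_integrable) auto
  have "J a s + J s t = J a t" "J a t + J t b = J a b"
    using combine[of a s t] combine[of a t b] st by auto
  moreover have "w (\<eta> s) - w (\<eta> a) \<le> J a s" "w (\<eta> t) - w (\<eta> s) \<le> J s t" "w (\<eta> b) - w (\<eta> t) \<le> J t b"
    using le st by auto
  ultimately have "w (\<eta> t) - w (\<eta> s) = J s t" using total by linarith
  then show ?thesis by (simp add: J_def)
qed

lemma norm_increment_le_integral_speed:
  assumes st: "a \<le> s" "s \<le> t" "t \<le> b"
  shows "norm (\<eta> t - \<eta> s) \<le> integral {s..t} (\<lambda>r. speed V c (\<eta> r))"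
proof -
  obtain N where N: "negligible N" "\<And>t. t \<in> {a..b} \<Longrightarrow> t \<notin> N \<Longrightarrow> (\<eta> has_vector_derivative \<eta>' t) (at t)"
    using derivative_negligibleE by blast
  obtain N' where N': "negligible N'" "\<And>t. t \<in> {a..b} \<Longrightarrow> t \<notin> N' \<Longrightarrow> norm (\<eta>' t) = speed V c (\<eta> t)"
    using speed_negligibleE by blast
  have "norm (\<eta> t - \<eta> s) \<le> integral {s..t} (\<lambda>r. norm (\<eta>' r))"
    by (rule AC_curve_norm_increment_le_integral[OF AC N norm_derivative_integrable st])
  also have "\<dots> = integral {s..t} (\<lambda>r. speed V c (\<eta> r))"
    by (rule integral_spike[OF N'(1)]) (use N'(2) st in auto)
  finally show ?thesis .
qed

lemma lipschitz_curve: "\<exists>L. L-lipschitz_on {a..b} \<eta>"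
proof -
  obtain K where K: "\<And>r. r \<in> {a..b} \<Longrightarrow> speed V c (\<eta> r) \<le> K"
    using compact_imp_bounded[OF compact_continuous_image[OF continuous_on_speed_curve compact_Icc]]
    unfolding bounded_iff by (metis abs_le_D1 image_eqI real_norm_def)
  have incr: "norm (\<eta> t - \<eta> s) \<le> K * (t - s)" if "a \<le> s" "s \<le> t" "t \<le> b" for s t
  proof -
    have "norm (\<eta> t - \<eta> s) \<le> integral {s..t} (\<lambda>r. speed V c (\<eta> r))"
      by (rule norm_increment_le_integral_speed[OF that])
    also have "\<dots> \<le> integral {s..t} (\<lambda>r. K)"
      using speed_curve_integrable[of s t 1] K that by (intro integral_le) auto
    finally show ?thesis using that by (simp add: mult.commute)
  qed
  have "dist (\<eta> x) (\<eta> y) \<le> K * dist x y" if "x \<in> {a..b}" "y \<in> {a..b}" for x y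
    using incr[of x y] incr[of y x] that
    by (cases "x \<le> y") (auto simp: dist_norm dist_real_def norm_minus_commute)
  moreover have "K \<ge> 0" using K[of a] speed_nonneg[of V c "\<eta> a"] a_le_b by simp
  ultimately have "K-lipschitz_on {a..b} \<eta>" by (auto simp: lipschitz_on_def)
  then show ?thesis ..
qed


lemma increment_rate_near:
  assumes t0: "t0 \<in> {a<..<b}" and e: "e > 0"
  shows "\<exists>\<delta>>0. \<forall>\<tau>. 0 < \<tau> \<and> \<tau> < \<delta> \<longrightarrow>
    \<bar>w (\<eta> (t0 + \<tau>)) - w (\<eta> t0) - \<tau> * (speed V c (\<eta> t0))\<^sup>2\<bar> \<le> e * \<tau> \<and>
    \<bar>w (\<eta> (t0 - \<tau>)) - w (\<eta> t0) + \<tau> * (speed V c (\<eta> t0))\<^sup>2\<bar> \<le> e * \<tau>"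
proof -
  let ?h = "\<lambda>r. (speed V c (\<eta> r))\<^sup>2"
  obtain \<delta> where \<delta>: "\<delta> > 0" "\<delta> \<le> b - t0" "\<delta> \<le> t0 - a"
    "\<And>\<tau>. 0 < \<tau> \<Longrightarrow> \<tau> < \<delta> \<Longrightarrow> \<bar>integral {t0..t0 + \<tau>} ?h - \<tau> * ?h t0\<bar> \<le> e * \<tau>"
    "\<And>\<tau>. 0 < \<tau> \<Longrightarrow> \<tau> < \<delta> \<Longrightarrow> \<bar>integral {t0 - \<tau>..t0} ?h - \<tau> * ?h t0\<bar> \<le> e * \<tau>"
    using integral_near_point_estimate[OF _ t0 e, of ?h] continuous_on_power[OF continuous_on_speed_curve]
    by blast
  show ?thesis
  proof (intro exI[of _ \<delta>] conjI allI impI)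
    fix \<tau> assume \<tau>: "0 < \<tau> \<and> \<tau> < \<delta>"
    have "w (\<eta> (t0 + \<tau>)) - w (\<eta> t0) = integral {t0..t0 + \<tau>} ?h"
      "w (\<eta> t0) - w (\<eta> (t0 - \<tau>)) = integral {t0 - \<tau>..t0} ?h"
      using \<tau> \<delta> t0 by (auto intro!: increment_eq_integral_speed_squared)
    then show "\<bar>w (\<eta> (t0 + \<tau>)) - w (\<eta> t0) - \<tau> * ?h t0\<bar> \<le> e * \<tau>"
      "\<bar>w (\<eta> (t0 - \<tau>)) - w (\<eta> t0) + \<tau> * ?h t0\<bar> \<le> e * \<tau>"
      using \<delta>(4,5)[of \<tau>] \<tau> by (simp_all add: abs_le_iff)
  qed (use \<delta> in auto)
qed

lemma displacement_near:
  assumes t0: "t0 \<in> {a<..<b}" and e: "e > 0"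
  shows "\<exists>\<delta>>0. \<forall>\<tau>. 0 < \<tau> \<and> \<tau> < \<delta> \<longrightarrow>
    norm (\<eta> (t0 + \<tau>) - \<eta> t0) \<le> (speed V c (\<eta> t0) + e) * \<tau> \<and>
    norm (\<eta> (t0 - \<tau>) - \<eta> t0) \<le> (speed V c (\<eta> t0) + e) * \<tau>"
proof -
  let ?h = "\<lambda>r. speed V c (\<eta> r)"
  obtain \<delta> where \<delta>: "\<delta> > 0" "\<delta> \<le> b - t0" "\<delta> \<le> t0 - a"
    "\<And>\<tau>. 0 < \<tau> \<Longrightarrow> \<tau> < \<delta> \<Longrightarrow> \<bar>integral {t0..t0 + \<tau>} ?h - \<tau> * ?h t0\<bar> \<le> e * \<tau>"
    "\<And>\<tau>. 0 < \<tau> \<Longrightarrow> \<tau> < \<delta> \<Longrightarrow> \<bar>integral {t0 - \<tau>..t0} ?h - \<tau> * ?h t0\<bar> \<le> e * \<tau>"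
    using integral_near_point_estimate[OF continuous_on_speed_curve t0 e] by blast
  show ?thesis
  proof (intro exI[of _ \<delta>] conjI allI impI)
    fix \<tau> assume \<tau>: "0 < \<tau> \<and> \<tau> < \<delta>"
    have "norm (\<eta> (t0 + \<tau>) - \<eta> t0) \<le> integral {t0..t0 + \<tau>} ?h"
      "norm (\<eta> t0 - \<eta> (t0 - \<tau>)) \<le> integral {t0 - \<tau>..t0} ?h"
      using \<tau> \<delta> t0 by (auto intro!: norm_increment_le_integral_speed)
    then show "norm (\<eta> (t0 + \<tau>) - \<eta> t0) \<le> (?h t0 + e) * \<tau>"
      "norm (\<eta> (t0 - \<tau>) - \<eta> t0) \<le> (?h t0 + e) * \<tau>"
      using \<delta>(4,5)[of \<tau>] \<tau> by (simp_all add: abs_le_iff norm_minus_commute algebra_simps)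
  qed (use \<delta> in auto)
qed

lemma chord_gradient_estimate_curve:
  assumes t0: "t0 \<in> {a<..<b}"
  shows "chord_gradient_estimate w \<eta> t0"
  unfolding chord_gradient_estimate_def
proof (intro allI impI)
  fix M \<epsilon> :: real assume "M > 0" "\<epsilon> > 0"
  moreover have "\<exists>r>0. \<forall>y\<in>ball (\<eta> t0) r. \<forall>z\<in>ball (\<eta> t0) r. \<bar>w y - w z\<bar> \<le> (speed V c (\<eta> t0) + e) * norm (y - z)"
    if "e > 0" for e
    using weak_gradient_local_lipschitz[OF W1inf open_U continuous_on_speed[OF continuous_V]
        subsolution_gradient_le_speed[OF subsolution] speed_nonneg curve_in_U that] t0
    by auto
  ultimately show "\<exists>\<rho>>0. \<forall>y. norm y < \<rho> \<longrightarrow>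
     \<bar>w (\<eta> t0 + y) - w (\<eta> t0) - ((\<eta> (t0 + M * norm y) - \<eta> t0) /\<^sub>R (M * norm y)) \<bullet> y\<bar>
       \<le> (2 / M + 3 * \<epsilon>) * norm y"
    using increment_rate_near[OF t0] displacement_near[OF t0]
    by (intro difference_quotient_gradient_estimate[OF speed_nonneg]) auto
qed

end

theorem mainTheorem4:
  fixes U :: "(real^'n) set" and V :: "real^'n \<Rightarrow> real" and c a b :: real
    and w1 w2 :: "real^'n \<Rightarrow> real" and g1 g2 :: "real^'n \<Rightarrow> real^'n"
    and \<eta> :: "real \<Rightarrow> real^'n" and \<eta>' :: "real \<Rightarrow> real^'n"
  assumes "open U" and "periodic_potential V"
    and "W1inf_grad U w1 g1" and "W1inf_grad U w2 g2"
    and "AE x in lebesgue. x \<in> U \<longrightarrow> (1/2) * (norm (g1 x))\<^sup>2 + V x \<le> c"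
    and "AE x in lebesgue. x \<in> U \<longrightarrow> (1/2) * (norm (g2 x))\<^sup>2 + V x \<le> c"
    and "AC_curve a b U \<eta>"
    and "AE t in lebesgue. t \<in> {a..b} \<longrightarrow> (\<eta> has_vector_derivative \<eta>' t) (at t)"
    and "((\<lambda>t. (1/2) * (norm (\<eta>' t))\<^sup>2 - V (\<eta> t) + c) has_integral (w1 (\<eta> b) - w1 (\<eta> a))) {a..b}"
    and "((\<lambda>t. (1/2) * (norm (\<eta>' t))\<^sup>2 - V (\<eta> t) + c) has_integral (w2 (\<eta> b) - w2 (\<eta> a))) {a..b}"
  shows "(AE t in lebesgue. t \<in> {a..b} \<longrightarrow> (1/2) * (norm (\<eta>' t))\<^sup>2 + V (\<eta> t) = c)
       \<and> (\<exists>L. L-lipschitz_on {a..b} \<eta>)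
       \<and> (\<forall>t0\<in>{a<..<b}. \<eta> differentiable (at t0) \<longrightarrow>
            (w1 has_derivative (\<lambda>h. vector_derivative \<eta> (at t0) \<bullet> h)) (at (\<eta> t0)) \<and>
            (w2 has_derivative (\<lambda>h. vector_derivative \<eta> (at t0) \<bullet> h)) (at (\<eta> t0)))
       \<and> (\<forall>x\<in>\<eta> ` {a<..<b}. ((\<lambda>y. w1 y - w2 y) has_derivative (\<lambda>h. 0)) (at x))"
proof (cases "a \<le> b")
  case False
  then have "{a..b} = {}" "{a<..<b} = {}" by auto
  moreover have "0-lipschitz_on {} \<eta>" by (simp add: lipschitz_on_def)
  ultimately show ?thesis by auto
next
  case True
  have V: "continuous_on UNIV V" using assms(2) by (simp add: periodic_potential_def)
  interpret C1: calibrated_curve U V c w1 g1 a b \<eta> \<eta>'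
    using assms V True by unfold_locales
  interpret C2: calibrated_curve U V c w2 g2 a b \<eta> \<eta>'
    using assms V True by unfold_locales
  have "(w1 has_derivative (\<lambda>h. vector_derivative \<eta> (at t0) \<bullet> h)) (at (\<eta> t0)) \<and>
      (w2 has_derivative (\<lambda>h. vector_derivative \<eta> (at t0) \<bullet> h)) (at (\<eta> t0))"
    if "t0 \<in> {a<..<b}" "\<eta> differentiable (at t0)" for t0
    using chord_gradient_estimate_has_derivative[OF C1.chord_gradient_estimate_curve[OF that(1)]]
      chord_gradient_estimate_has_derivative[OF C2.chord_gradient_estimate_curve[OF that(1)]]
      vector_derivative_works[THEN iffD1, OF that(2)]
    by blast
  moreover have "((\<lambda>y. w1 y - w2 y) has_derivative (\<lambda>h. 0)) (at (\<eta> t0))" if "t0 \<in> {a<..<b}" for t0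
    using chord_gradient_estimate_diff_has_derivative_0[OF
        C1.chord_gradient_estimate_curve[OF that] C2.chord_gradient_estimate_curve[OF that]] .
  ultimately show ?thesis
    using C1.energy_conservation C1.lipschitz_curve by blast
qed

end
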